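(* Let $\mathcal{G}$ and $\mathcal{H}$ be finite simple hypergraphs such that $V(\mathcal{H})=V(\mathcal{G})\cup\{w_1,\ldots,w_t\}$ with $w_i\notin V(\mathcal{G})$ for all $i$, and $E(\mathcal{H})=E(\mathcal{G})\cup\{\{v,w_1,\ldots,w_t\}\}$ for some vertex $v\in V(\mathcal{G})$. Let $R=K[x_\alpha:\alpha\in V(\mathcal{G})]$ and $R'=K[x_\alpha:\alpha\in V(\mathcal{H})]$. Then for all $s\geq1$, $$\mathrm{Ass}_{R'}(R'/J(\mathcal{H})^s)=\mathrm{Ass}_R(R/J(\mathcal{G})^s)\cup\{(x_v,x_{w_1},\ldots,x_{w_t})\},$$ where monomial primes of $R$ are regarded as monomial primes of $R'$ (generated by the same variables).
   Context: A hypergraph $\mathcal{H}$ on a finite vertex set is a collection of subsets (edges); it is simple if no edge contains another. A vertex cover of $\mathcal H$ is a set of vertices meeting every edge; it is minimal if no proper subset is a vertex cover. The cover ideal is $J(\mathcal{H})=(\prod_{i\in W}x_i : W \text{ a minimal vertex cover of } \mathcal{H})$. $\mathrm{Ass}$ denotes the set of associated primes. *)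

theory Defs
  imports "HOL-Library.Poly_Mapping"
begin

type_synonym ('v, 'k) mpoly = "('v \<Rightarrow>\<^sub>0 nat) \<Rightarrow>\<^sub>0 'k"

text \<open>The polynomial ring K[x_a : a in X], as a subring of all polynomials.\<close>
definition polys_in :: "'v set \<Rightarrow> ('v, 'k::field) mpoly set" where
  "polys_in X = {p :: ('v, 'k) mpoly. \<forall>m \<in> Poly_Mapping.keys p. Poly_Mapping.keys m \<subseteq> X}"

definition var :: "'v \<Rightarrow> ('v, 'k::field) mpoly" where
  "var i = Poly_Mapping.single (Poly_Mapping.single i 1) 1"

definition is_ideal_in :: "('v, 'k::field) mpoly set \<Rightarrow> ('v, 'k) mpoly set \<Rightarrow> bool" where
  "is_ideal_in S I \<longleftrightarrow> I \<subseteq> S \<and> 0 \<in> I \<and> (\<forall>a\<in>I. \<forall>b\<in>I. a + b \<in> I)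
     \<and> (\<forall>r\<in>S. \<forall>a\<in>I. r * a \<in> I)"

definition ideal_gen :: "('v, 'k::field) mpoly set \<Rightarrow> ('v, 'k) mpoly set \<Rightarrow> ('v, 'k) mpoly set" where
  "ideal_gen S G = \<Inter> {I. is_ideal_in S I \<and> G \<subseteq> I}"

fun ideal_pow :: "('v, 'k::field) mpoly set \<Rightarrow> ('v, 'k) mpoly set \<Rightarrow> nat \<Rightarrow> ('v, 'k) mpoly set" where
  "ideal_pow S I 0 = S"
| "ideal_pow S I (Suc n) = ideal_gen S {a * b | a b. a \<in> ideal_pow S I n \<and> b \<in> I}"

definition is_prime_in :: "('v, 'k::field) mpoly set \<Rightarrow> ('v, 'k) mpoly set \<Rightarrow> bool" where
  "is_prime_in S P \<longleftrightarrow> is_ideal_in S P \<and> P \<noteq> S \<and>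
     (\<forall>a\<in>S. \<forall>b\<in>S. a * b \<in> P \<longrightarrow> a \<in> P \<or> b \<in> P)"

definition Ass :: "('v, 'k::field) mpoly set \<Rightarrow> ('v, 'k) mpoly set \<Rightarrow> ('v, 'k) mpoly set set" where
  "Ass S I = {P. is_prime_in S P \<and> (\<exists>g\<in>S. P = {f \<in> S. f * g \<in> I})}"

definition simple_hypergraph :: "'v set \<Rightarrow> 'v set set \<Rightarrow> bool" where
  "simple_hypergraph V E \<longleftrightarrow> finite V \<and> (\<forall>e\<in>E. e \<subseteq> V) \<and>
     (\<forall>e\<in>E. \<forall>f\<in>E. e \<subseteq> f \<longrightarrow> e = f)"

definition vertex_cover :: "'v set \<Rightarrow> 'v set set \<Rightarrow> 'v set \<Rightarrow> bool" where
  "vertex_cover V E W \<longleftrightarrow> W \<subseteq> V \<and> (\<forall>e\<in>E. W \<inter> e \<noteq> {})"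

definition minimal_vertex_cover :: "'v set \<Rightarrow> 'v set set \<Rightarrow> 'v set \<Rightarrow> bool" where
  "minimal_vertex_cover V E W \<longleftrightarrow> vertex_cover V E W \<and> (\<forall>W'. W' \<subset> W \<longrightarrow> \<not> vertex_cover V E W')"

definition cover_ideal :: "'v set \<Rightarrow> 'v set set \<Rightarrow> ('v, 'k::field) mpoly set" where
  "cover_ideal V E = ideal_gen (polys_in V)
     {(\<Prod>i\<in>W. var i) | W. minimal_vertex_cover V E W}"

end

theory Submission
  imports Defs
begin

text \<open>The monomials of \<open>J(H)\<^sup>s\<close> are the \<open>x\<^sup>\<mu>\<close> whose exponent \<open>\<mu>\<close> dominates the sum of the
  indicator vectors of \<open>s\<close> vertex covers of \<open>H\<close>, and the associated primes of a monomial ideal \<open>I\<close>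
  are the primes \<open>(x\<^sub>a : a \<in> A)\<close> that arise as a colon ideal \<open>(I : x\<^sup>\<mu>)\<close> of a single monomial.

  When \<open>H\<close> is \<open>G\<close> plus the edge \<open>{v} \<union> W\<close>, an exponent \<open>\<mu>\<close> dominates \<open>s\<close> covers of \<open>H\<close> iff it
  dominates \<open>s\<close> covers of \<open>G\<close> and \<open>\<mu> v + (\<Sum>w\<in>W. \<mu> w) \<ge> s\<close>: covers of \<open>G\<close> missing \<open>v\<close> are
  completed greedily by one vertex of the new edge. Hence a witness \<open>x\<^sup>\<mu>\<close> of an associated prime
  of \<open>J(H)\<^sup>s\<close> either, after dropping its \<open>W\<close>-part, witnesses an associated prime of \<open>J(G)\<^sup>s\<close>,
  or it only lacks weight on the new edge, and then the prime is \<open>(x\<^sub>v, x\<^sub>w : w \<in> W)\<close>.\<close>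

lemma poly_mapping_sum_single:
  "(f :: 'a \<Rightarrow>\<^sub>0 'b::comm_monoid_add) =
     (\<Sum>\<tau>\<in>Poly_Mapping.keys f. Poly_Mapping.single \<tau> (Poly_Mapping.lookup f \<tau>))"
  by (rule poly_mapping_eqI) (auto simp: lookup_sum lookup_single when_def in_keys_iff)

lemma keys_add_nat:
  "Poly_Mapping.keys (\<mu> + \<nu>) = Poly_Mapping.keys \<mu> \<union> Poly_Mapping.keys (\<nu> :: 'a \<Rightarrow>\<^sub>0 nat)"
  by (auto simp: in_keys_iff lookup_add)

lemma keys_diff_nat_subset:
  "Poly_Mapping.keys (\<mu> - \<nu>) \<subseteq> Poly_Mapping.keys (\<mu> :: 'a \<Rightarrow>\<^sub>0 nat)"
  by (auto simp: in_keys_iff lookup_minus)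

lemma lookup_single_if: "Poly_Mapping.lookup (Poly_Mapping.single a k) i = (if i = a then k else 0)"
  by (simp add: lookup_single when_def eq_commute)

lemma keys_mult_single_one:
  fixes f :: "('a::cancel_comm_monoid_add \<Rightarrow>\<^sub>0 'b::semiring_1)"
  shows "Poly_Mapping.keys (f * Poly_Mapping.single \<kappa> 1) = (\<lambda>\<tau>. \<tau> + \<kappa>) ` Poly_Mapping.keys f"
proof -
  have "Poly_Mapping.lookup (f * Poly_Mapping.single \<kappa> 1) (\<tau> + \<kappa>) = Poly_Mapping.lookup f \<tau>" for \<tau>
  proof -
    have inner: "(\<Sum>b. 1 when \<kappa> = b when \<tau> + \<kappa> = a + b) = (1 when a = \<tau>)" for a :: 'a
    proof (cases "a = \<tau>")
      case False
      then have zero: "(\<lambda>b. 1 when \<kappa> = b when \<tau> + \<kappa> = a + b) = (\<lambda>_. 0)"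
        by (auto simp: fun_eq_iff when_def)
      show ?thesis unfolding zero using False by simp
    qed (simp add: when_when conj_commute)
    show ?thesis
      by (simp only: lookup_mult lookup_single inner mult_when) simp
  qed
  then show ?thesis
    using keys_mult[of f "Poly_Mapping.single \<kappa> 1"] by (force simp: in_keys_iff)
qed

definition restrict_keys :: "('a \<Rightarrow> bool) \<Rightarrow> ('a \<Rightarrow>\<^sub>0 'b::zero) \<Rightarrow> 'a \<Rightarrow>\<^sub>0 'b" where
  "restrict_keys Q f = Abs_poly_mapping (\<lambda>x. if Q x then Poly_Mapping.lookup f x else 0)"

lemma lookup_restrict_keys:
  "Poly_Mapping.lookup (restrict_keys Q f) x = (if Q x then Poly_Mapping.lookup f x else 0)"
proof -
  have "{x. (if Q x then Poly_Mapping.lookup f x else 0) \<noteq> 0} \<subseteq> Poly_Mapping.keys f"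
    by (auto simp: in_keys_iff split: if_splits)
  then have "finite {x. (if Q x then Poly_Mapping.lookup f x else 0) \<noteq> 0}"
    using finite_keys finite_subset by blast
  then show ?thesis
    unfolding restrict_keys_def by simp
qed

lemma keys_restrict_keys: "Poly_Mapping.keys (restrict_keys Q f) = {x \<in> Poly_Mapping.keys f. Q x}"
  by (auto simp: in_keys_iff lookup_restrict_keys split: if_splits)

lemma restrict_keys_add:
  "restrict_keys Q (f + g) = restrict_keys Q f + restrict_keys Q (g :: 'a \<Rightarrow>\<^sub>0 'b::monoid_add)"
  by (rule poly_mapping_eqI) (simp add: lookup_restrict_keys lookup_add)

lemma restrict_keys_split:
  "(f :: 'a \<Rightarrow>\<^sub>0 'b::monoid_add) = restrict_keys Q f + restrict_keys (\<lambda>x. \<not> Q x) f"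
  by (rule poly_mapping_eqI) (simp add: lookup_restrict_keys lookup_add)

lemma restrict_keys_id: "(\<And>x. x \<in> Poly_Mapping.keys f \<Longrightarrow> Q x) \<Longrightarrow> restrict_keys Q f = f"
  by (rule poly_mapping_eqI) (auto simp: lookup_restrict_keys in_keys_iff)

lemma restrict_keys_eq_0: "(\<And>x. x \<in> Poly_Mapping.keys f \<Longrightarrow> \<not> Q x) \<Longrightarrow> restrict_keys Q f = 0"
  by (rule poly_mapping_eqI) (auto simp: lookup_restrict_keys in_keys_iff)

lemma restrict_keys_0 [simp]: "restrict_keys Q 0 = 0"
  by (rule restrict_keys_eq_0) simp

lemma restrict_keys_restrict_keys:
  "restrict_keys Q (restrict_keys Q' f) = restrict_keys (\<lambda>x. Q x \<and> Q' x) f"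
  by (rule poly_mapping_eqI) (simp add: lookup_restrict_keys)

lemma polys_in_iff: "f \<in> polys_in X \<longleftrightarrow> (\<forall>\<tau>\<in>Poly_Mapping.keys f. Poly_Mapping.keys \<tau> \<subseteq> X)"
  by (simp add: polys_in_def)

lemma polys_in_add: "f \<in> polys_in X \<Longrightarrow> g \<in> polys_in X \<Longrightarrow> f + g \<in> polys_in X"
  using keys_add[of f g] by (auto simp: polys_in_iff)

lemma polys_in_mult:
  assumes "f \<in> polys_in X" "g \<in> polys_in X"
  shows "f * g \<in> polys_in X"
  unfolding polys_in_iff
proof
  fix \<tau> assume "\<tau> \<in> Poly_Mapping.keys (f * g)"
  then obtain \<sigma> \<rho> where "\<sigma> \<in> Poly_Mapping.keys f" "\<rho> \<in> Poly_Mapping.keys g" "\<tau> = \<sigma> + \<rho>"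
    using keys_mult[of f g] by blast
  then show "Poly_Mapping.keys \<tau> \<subseteq> X"
    using assms by (auto simp: polys_in_iff keys_add_nat)
qed

lemma polys_in_uminus: "f \<in> polys_in X \<Longrightarrow> - f \<in> polys_in X"
  by (simp add: polys_in_iff)

lemma polys_in_diff: "f \<in> polys_in X \<Longrightarrow> g \<in> polys_in X \<Longrightarrow> f - g \<in> polys_in X"
  using keys_diff[of f g] by (auto simp: polys_in_iff)

lemma polys_in_single: "Poly_Mapping.keys \<tau> \<subseteq> X \<Longrightarrow> Poly_Mapping.single \<tau> c \<in> polys_in X"
  by (simp add: polys_in_iff)

lemma polys_in_const [simp]: "Poly_Mapping.single 0 c \<in> polys_in X"
  by (simp add: polys_in_iff)

lemma polys_in_0 [simp]: "0 \<in> polys_in X" and polys_in_1 [simp]: "1 \<in> polys_in X"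
  by (simp_all add: polys_in_iff)

lemma polys_in_var: "a \<in> X \<Longrightarrow> var a \<in> polys_in X"
  by (simp add: polys_in_iff var_def)

lemma polys_in_prod: "(\<And>x. x \<in> A \<Longrightarrow> f x \<in> polys_in X) \<Longrightarrow> prod f A \<in> polys_in X"
  by (induction A rule: infinite_finite_induct) (auto intro: polys_in_mult)

lemma polys_in_power: "f \<in> polys_in X \<Longrightarrow> f ^ k \<in> polys_in X"
  by (induction k) (auto intro: polys_in_mult)

lemma polys_in_mono: "Y \<subseteq> X \<Longrightarrow> polys_in Y \<subseteq> polys_in X"
  unfolding polys_in_def by blast

lemma polys_in_restrict_keys: "f \<in> polys_in X \<Longrightarrow> restrict_keys Q f \<in> polys_in X"
  by (auto simp: polys_in_iff keys_restrict_keys)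

lemma exps_eqI:
  assumes "Poly_Mapping.keys \<sigma> \<subseteq> X" "Poly_Mapping.keys \<tau> \<subseteq> X"
    and "\<And>j. j \<in> X \<Longrightarrow> Poly_Mapping.lookup \<sigma> j = Poly_Mapping.lookup \<tau> j"
  shows "\<sigma> = \<tau>"
proof (rule poly_mapping_eqI)
  fix j
  show "Poly_Mapping.lookup \<sigma> j = Poly_Mapping.lookup \<tau> j"
  proof (cases "j \<in> X")
    case False
    then have "j \<notin> Poly_Mapping.keys \<sigma>" "j \<notin> Poly_Mapping.keys \<tau>"
      using assms(1,2) by blast+
    then show ?thesis by (simp add: in_keys_iff)
  qed (use assms(3) in blast)
qed

context
  fixes X :: "'v set" and I :: "('v, 'k::field) mpoly set"
  assumes ideal: "is_ideal_in (polys_in X) I"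
begin

lemma ideal_subset: "a \<in> I \<Longrightarrow> a \<in> polys_in X"
  using ideal unfolding is_ideal_in_def by blast

lemma ideal_0: "0 \<in> I"
  using ideal unfolding is_ideal_in_def by blast

lemma ideal_add: "a \<in> I \<Longrightarrow> b \<in> I \<Longrightarrow> a + b \<in> I"
  using ideal unfolding is_ideal_in_def by blast

lemma ideal_mult_left: "r \<in> polys_in X \<Longrightarrow> a \<in> I \<Longrightarrow> r * a \<in> I"
  using ideal unfolding is_ideal_in_def by blast

lemma ideal_mult_right: "r \<in> polys_in X \<Longrightarrow> a \<in> I \<Longrightarrow> a * r \<in> I"
  using ideal_mult_left[of r a] by (simp add: mult.commute)

lemma ideal_diff: "a \<in> I \<Longrightarrow> b \<in> I \<Longrightarrow> a - b \<in> I"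
  using ideal_add[of a "- 1 * b"] ideal_mult_left[OF polys_in_uminus[OF polys_in_1], of b]
  by simp

lemma ideal_sum: "(\<And>x. x \<in> A \<Longrightarrow> f x \<in> I) \<Longrightarrow> sum f A \<in> I"
  by (induction A rule: infinite_finite_induct) (auto intro: ideal_add ideal_0)

lemma ideal_diff_iff: "b \<in> I \<Longrightarrow> a - b \<in> I \<longleftrightarrow> a \<in> I"
  using ideal_add[of "a - b" b] ideal_diff[of a b] by auto

lemma ideal_eq_polys_in_if_1:
  assumes "1 \<in> I"
  shows "I = polys_in X"
proof
  show "polys_in X \<subseteq> I"
    using ideal_mult_right[OF _ assms] by (metis subsetI mult_1)
qed (use ideal_subset in blast)

lemma ideal_if_monomials:
  assumes "f \<in> polys_in X"
    and "\<And>\<tau>. \<tau> \<in> Poly_Mapping.keys f \<Longrightarrow> Poly_Mapping.single \<tau> 1 \<in> I"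
  shows "f \<in> I"
proof -
  have "Poly_Mapping.single 0 (Poly_Mapping.lookup f \<tau>) * Poly_Mapping.single \<tau> 1 \<in> I"
    if "\<tau> \<in> Poly_Mapping.keys f" for \<tau>
    by (rule ideal_mult_left[OF polys_in_const assms(2)[OF that]])
  then have "(\<Sum>\<tau>\<in>Poly_Mapping.keys f. Poly_Mapping.single \<tau> (Poly_Mapping.lookup f \<tau>)) \<in> I"
    by (intro ideal_sum) (simp add: mult_single)
  then show ?thesis
    by (subst poly_mapping_sum_single)
qed

lemma ideal_mult_if_mult_monomials:
  assumes "\<And>\<kappa>. \<kappa> \<in> Poly_Mapping.keys g \<Longrightarrow> f * Poly_Mapping.single \<kappa> 1 \<in> I"
  shows "f * g \<in> I"
proof -
  have "f * g = f * (\<Sum>\<kappa>\<in>Poly_Mapping.keys g. Poly_Mapping.single \<kappa> (Poly_Mapping.lookup g \<kappa>))"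
    by (rule arg_cong[where f = "(*) f", OF poly_mapping_sum_single])
  also have "\<dots> = (\<Sum>\<kappa>\<in>Poly_Mapping.keys g. Poly_Mapping.single 0 (Poly_Mapping.lookup g \<kappa>) * (f * Poly_Mapping.single \<kappa> 1))"
    by (simp add: sum_distrib_left mult_single algebra_simps)
  also have "\<dots> \<in> I"
    using assms by (intro ideal_sum ideal_mult_left[OF polys_in_const])
  finally show ?thesis .
qed

end

lemma ideal_gen_is_ideal:
  assumes "G \<subseteq> polys_in X"
  shows "is_ideal_in (polys_in X) (ideal_gen (polys_in X) G)"
proof -
  let ?F = "{I. is_ideal_in (polys_in X) I \<and> G \<subseteq> I}"
  have "is_ideal_in (polys_in X) (polys_in X)"
    by (auto simp: is_ideal_in_def intro: polys_in_add polys_in_mult)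
  with assms have "polys_in X \<in> ?F"
    by blast
  then have "\<Inter>?F \<subseteq> polys_in X"
    by blast
  moreover have "0 \<in> \<Inter>?F" "\<forall>a\<in>\<Inter>?F. \<forall>b\<in>\<Inter>?F. a + b \<in> \<Inter>?F"
    "\<forall>r\<in>polys_in X. \<forall>a\<in>\<Inter>?F. r * a \<in> \<Inter>?F"
    by (auto simp: is_ideal_in_def)
  ultimately show ?thesis
    unfolding ideal_gen_def is_ideal_in_def by blast
qed

lemma ideal_gen_superset: "G \<subseteq> ideal_gen S G"
  unfolding ideal_gen_def by blast

lemma ideal_gen_least: "is_ideal_in S I \<Longrightarrow> G \<subseteq> I \<Longrightarrow> ideal_gen S G \<subseteq> I"
  unfolding ideal_gen_def by blast

lemma ideal_gen_eqI:
  assumes "G \<subseteq> polys_in X" "H \<subseteq> polys_in X"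
    and "G \<subseteq> ideal_gen (polys_in X) H" "H \<subseteq> ideal_gen (polys_in X) G"
  shows "ideal_gen (polys_in X) G = ideal_gen (polys_in X) H"
  using ideal_gen_least[OF ideal_gen_is_ideal[OF assms(2)] assms(3)]
    ideal_gen_least[OF ideal_gen_is_ideal[OF assms(1)] assms(4)]
  by (rule subset_antisym)

lemma ideal_gen_mono: "G \<subseteq> G' \<Longrightarrow> ideal_gen S G \<subseteq> ideal_gen S G'"
  unfolding ideal_gen_def by blast

context
  fixes X :: "'v set" and P :: "('v, 'k::field) mpoly set"
  assumes prime: "is_prime_in (polys_in X) P"
begin

lemma prime_is_ideal: "is_ideal_in (polys_in X) P"
  using prime unfolding is_prime_in_def by blast

lemma one_notin_prime: "1 \<notin> P"
  using prime ideal_eq_polys_in_if_1[OF prime_is_ideal] unfolding is_prime_in_def by blast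

lemma prime_mult_dest: "a \<in> polys_in X \<Longrightarrow> b \<in> polys_in X \<Longrightarrow> a * b \<in> P \<Longrightarrow> a \<in> P \<or> b \<in> P"
  using prime unfolding is_prime_in_def by blast

lemma prime_power_dest: "a \<in> polys_in X \<Longrightarrow> a ^ k \<in> P \<Longrightarrow> a \<in> P"
proof (induction k)
  case (Suc k)
  then show ?case using prime_mult_dest[of a "a ^ k"] polys_in_power[of a X k] by auto
qed (use one_notin_prime in simp)

lemma prime_prod_dest:
  "finite A \<Longrightarrow> (\<And>x. x \<in> A \<Longrightarrow> h x \<in> polys_in X) \<Longrightarrow> prod h A \<in> P \<Longrightarrow> \<exists>x\<in>A. h x \<in> P"
proof (induction A rule: finite_induct)
  case (insert x F)
  then show ?case using prime_mult_dest[of "h x" "prod h F"] polys_in_prod[of F h X] by auto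
qed (use one_notin_prime in simp)

end

section \<open>Monomial ideals\<close>

definition monomial_ideal :: "'v set \<Rightarrow> (('v \<Rightarrow>\<^sub>0 nat) \<Rightarrow> bool) \<Rightarrow> ('v, 'k::field) mpoly set" where
  "monomial_ideal X M = {f \<in> polys_in X. \<forall>\<tau>\<in>Poly_Mapping.keys f. M \<tau>}"

definition upward_closed :: "'v set \<Rightarrow> (('v \<Rightarrow>\<^sub>0 nat) \<Rightarrow> bool) \<Rightarrow> bool" where
  "upward_closed X M \<longleftrightarrow> (\<forall>\<mu> \<nu>. M \<mu> \<longrightarrow> Poly_Mapping.keys \<nu> \<subseteq> X \<longrightarrow> M (\<mu> + \<nu>))"

definition exp_dvd :: "('v \<Rightarrow>\<^sub>0 nat) \<Rightarrow> ('v \<Rightarrow>\<^sub>0 nat) \<Rightarrow> bool" where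
  "exp_dvd \<beta> \<mu> \<longleftrightarrow> (\<forall>i. Poly_Mapping.lookup \<beta> i \<le> Poly_Mapping.lookup \<mu> i)"

lemma exp_dvd_refl: "exp_dvd \<mu> \<mu>"
  by (simp add: exp_dvd_def)

lemma exp_dvd_add_right: "exp_dvd \<beta> \<mu> \<Longrightarrow> exp_dvd \<beta> (\<mu> + \<nu>)"
  by (auto simp: exp_dvd_def lookup_add intro: trans_le_add1)

lemma exp_dvd_add_diff: "exp_dvd \<beta> \<mu> \<Longrightarrow> (\<mu> - \<beta>) + \<beta> = \<mu>"
  by (rule poly_mapping_eqI) (auto simp: exp_dvd_def lookup_add lookup_minus)

lemma monomial_ideal_iff:
  "f \<in> monomial_ideal X M \<longleftrightarrow> f \<in> polys_in X \<and> (\<forall>\<tau>\<in>Poly_Mapping.keys f. M \<tau>)"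
  by (simp add: monomial_ideal_def)

lemma monomial_ideal_cong:
  "(\<And>\<mu>. Poly_Mapping.keys \<mu> \<subseteq> X \<Longrightarrow> M \<mu> \<longleftrightarrow> N \<mu>) \<Longrightarrow>
     (monomial_ideal X M :: ('v, 'k::field) mpoly set) = monomial_ideal X N"
  unfolding monomial_ideal_def polys_in_def by blast

lemma single_in_monomial_ideal_iff:
  "Poly_Mapping.keys \<mu> \<subseteq> X \<Longrightarrow> c \<noteq> 0 \<Longrightarrow>
     (Poly_Mapping.single \<mu> c :: ('v, 'k::field) mpoly) \<in> monomial_ideal X M \<longleftrightarrow> M \<mu>"
  by (simp add: monomial_ideal_iff polys_in_single)

lemma restrict_keys_in_monomial_ideal:
  "f \<in> monomial_ideal X M \<Longrightarrow> restrict_keys Q f \<in> monomial_ideal X M"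
  by (auto simp: monomial_ideal_iff keys_restrict_keys intro: polys_in_restrict_keys)

lemma mult_single_in_monomial_ideal_iff:
  fixes f :: "('v, 'k::field) mpoly"
  assumes "Poly_Mapping.keys \<mu> \<subseteq> X" and "f \<in> polys_in X"
  shows "f * Poly_Mapping.single \<mu> 1 \<in> monomial_ideal X M \<longleftrightarrow> (\<forall>\<tau>\<in>Poly_Mapping.keys f. M (\<tau> + \<mu>))"
  using polys_in_mult[OF assms(2) polys_in_single[OF assms(1)]]
  by (simp add: monomial_ideal_iff keys_mult_single_one)

lemma monomial_ideal_is_ideal:
  assumes "upward_closed X M"
  shows "is_ideal_in (polys_in X) (monomial_ideal X M :: ('v, 'k::field) mpoly set)"
  unfolding is_ideal_in_def
proof (intro conjI ballI)
  fix a b r :: "('v, 'k) mpoly"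
  assume a: "a \<in> monomial_ideal X M"
  show "b \<in> monomial_ideal X M \<Longrightarrow> a + b \<in> monomial_ideal X M"
    using a keys_add[of a b] by (auto simp: monomial_ideal_iff intro: polys_in_add)
  assume r: "r \<in> polys_in X"
  have "M (y + x)" if "x \<in> Poly_Mapping.keys r" "y \<in> Poly_Mapping.keys a" for x y
    using assms a r that unfolding upward_closed_def monomial_ideal_iff polys_in_iff by blast
  then show "r * a \<in> monomial_ideal X M"
    using a r keys_mult[of r a]
    by (auto simp: monomial_ideal_iff add.commute intro: polys_in_mult)
qed (auto simp: monomial_ideal_iff)

lemma ideal_gen_monomials:
  assumes "\<And>\<beta>. \<beta> \<in> B \<Longrightarrow> Poly_Mapping.keys \<beta> \<subseteq> X"
  shows "ideal_gen (polys_in X) ((\<lambda>\<beta>. Poly_Mapping.single \<beta> 1) ` B) =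
    (monomial_ideal X (\<lambda>\<mu>. Poly_Mapping.keys \<mu> \<subseteq> X \<and> (\<exists>\<beta>\<in>B. exp_dvd \<beta> \<mu>)) :: ('v, 'k::field) mpoly set)"
    (is "ideal_gen _ ?G = monomial_ideal X ?M")
proof
  have "upward_closed X ?M"
    unfolding upward_closed_def by (auto simp: keys_add_nat intro: exp_dvd_add_right)
  moreover have "?G \<subseteq> monomial_ideal X ?M"
  proof
    fix p assume "p \<in> ?G"
    then obtain \<beta> where "\<beta> \<in> B" "p = Poly_Mapping.single \<beta> 1" by blast
    then show "p \<in> monomial_ideal X ?M"
      using assms[of \<beta>] exp_dvd_refl[of \<beta>] by (auto simp: single_in_monomial_ideal_iff)
  qed
  ultimately show "ideal_gen (polys_in X) ?G \<subseteq> monomial_ideal X ?M"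
    by (intro ideal_gen_least monomial_ideal_is_ideal)
next
  have gen_ideal: "is_ideal_in (polys_in X) (ideal_gen (polys_in X) ?G)"
    using assms by (intro ideal_gen_is_ideal) (auto intro: polys_in_single)
  show "monomial_ideal X ?M \<subseteq> ideal_gen (polys_in X) ?G"
  proof
    fix f :: "('v, 'k) mpoly" assume f: "f \<in> monomial_ideal X ?M"
    show "f \<in> ideal_gen (polys_in X) ?G"
    proof (rule ideal_if_monomials[OF gen_ideal])
      fix \<tau> assume "\<tau> \<in> Poly_Mapping.keys f"
      then obtain \<beta> where \<beta>: "\<beta> \<in> B" "exp_dvd \<beta> \<tau>" and \<tau>: "Poly_Mapping.keys \<tau> \<subseteq> X"
        using f by (auto simp: monomial_ideal_iff)
      have "Poly_Mapping.single \<tau> 1 = Poly_Mapping.single (\<tau> - \<beta>) 1 * (Poly_Mapping.single \<beta> 1 :: ('v, 'k) mpoly)"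
        by (simp add: mult_single exp_dvd_add_diff[OF \<beta>(2)])
      moreover have "Poly_Mapping.single (\<tau> - \<beta>) 1 \<in> polys_in X"
        by (rule polys_in_single[OF subset_trans[OF keys_diff_nat_subset \<tau>]])
      moreover have "Poly_Mapping.single \<beta> 1 \<in> ideal_gen (polys_in X) ?G"
        by (rule subsetD[OF ideal_gen_superset imageI[OF \<beta>(1)]])
      ultimately show "Poly_Mapping.single \<tau> 1 \<in> ideal_gen (polys_in X) ?G"
        using ideal_mult_left[OF gen_ideal] by metis
    qed (use f in \<open>simp add: monomial_ideal_iff\<close>)
  qed
qed

lemma keys_mult_monomial_ideals:
  assumes "a \<in> monomial_ideal X M1" and "b \<in> monomial_ideal X M2" and "\<tau> \<in> Poly_Mapping.keys (a * b)"
  shows "\<exists>\<mu>1 \<mu>2. \<tau> = \<mu>1 + \<mu>2 \<and> M1 \<mu>1 \<and> M2 \<mu>2"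
proof -
  obtain \<sigma> \<rho> where "\<sigma> \<in> Poly_Mapping.keys a" "\<rho> \<in> Poly_Mapping.keys b" "\<tau> = \<sigma> + \<rho>"
    using assms(3) keys_mult[of a b] by blast
  then show ?thesis
    using assms(1,2) by (auto simp: monomial_ideal_iff)
qed

lemma ideal_gen_products_monomial_ideals:
  assumes "\<And>\<mu>. M1 \<mu> \<Longrightarrow> Poly_Mapping.keys \<mu> \<subseteq> X" and "\<And>\<mu>. M2 \<mu> \<Longrightarrow> Poly_Mapping.keys \<mu> \<subseteq> X"
  shows "ideal_gen (polys_in X) {a * b | a b. a \<in> monomial_ideal X M1 \<and> b \<in> monomial_ideal X M2} =
    (monomial_ideal X (\<lambda>\<mu>. Poly_Mapping.keys \<mu> \<subseteq> X \<and>
       (\<exists>\<beta>\<in>{\<mu>1 + \<mu>2 | \<mu>1 \<mu>2. M1 \<mu>1 \<and> M2 \<mu>2}. exp_dvd \<beta> \<mu>)) :: ('v, 'k::field) mpoly set)"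
proof -
  define B where "B = {\<mu>1 + \<mu>2 | \<mu>1 \<mu>2. M1 \<mu>1 \<and> M2 \<mu>2}"
  define P :: "('v, 'k) mpoly set"
    where "P = {a * b | a b. a \<in> monomial_ideal X M1 \<and> b \<in> monomial_ideal X M2}"
  define G :: "('v, 'k) mpoly set" where "G = (\<lambda>\<beta>. Poly_Mapping.single \<beta> 1) ` B"
  have B: "Poly_Mapping.keys \<beta> \<subseteq> X" if "\<beta> \<in> B" for \<beta>
    using that assms unfolding B_def by (fastforce simp: keys_add_nat)
  have gen_B: "ideal_gen (polys_in X) G = monomial_ideal X (\<lambda>\<mu>. Poly_Mapping.keys \<mu> \<subseteq> X \<and> (\<exists>\<beta>\<in>B. exp_dvd \<beta> \<mu>))"
    unfolding G_def by (rule ideal_gen_monomials[OF B])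
  have P: "P \<subseteq> polys_in X"
    by (auto simp: P_def monomial_ideal_iff intro: polys_in_mult)
  have "G \<subseteq> P"
  proof
    fix p assume "p \<in> G"
    then obtain \<mu>1 \<mu>2 where p: "p = Poly_Mapping.single \<mu>1 1 * Poly_Mapping.single \<mu>2 1"
      and "M1 \<mu>1" "M2 \<mu>2"
      by (auto simp: G_def B_def mult_single)
    then have "Poly_Mapping.single \<mu>1 1 \<in> monomial_ideal X M1" "Poly_Mapping.single \<mu>2 1 \<in> monomial_ideal X M2"
      using assms by (simp_all add: single_in_monomial_ideal_iff)
    then show "p \<in> P"
      unfolding P_def p by blast
  qed
  moreover have "P \<subseteq> ideal_gen (polys_in X) G"
  proof
    fix p assume "p \<in> P"
    then obtain a b where ab: "p = a * b" "a \<in> monomial_ideal X M1" "b \<in> monomial_ideal X M2"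
      unfolding P_def by blast
    have "Poly_Mapping.keys \<tau> \<subseteq> X \<and> (\<exists>\<beta>\<in>B. exp_dvd \<beta> \<tau>)" if "\<tau> \<in> Poly_Mapping.keys p" for \<tau>
    proof -
      have "\<tau> \<in> B"
        unfolding B_def using keys_mult_monomial_ideals[OF ab(2,3)] that ab(1) by blast
      then show ?thesis
        using B exp_dvd_refl by blast
    qed
    then show "p \<in> ideal_gen (polys_in X) G"
      unfolding gen_B using subsetD[OF P \<open>p \<in> P\<close>] by (simp add: monomial_ideal_iff)
  qed
  ultimately have "ideal_gen (polys_in X) P = ideal_gen (polys_in X) G"
    using P by (intro ideal_gen_eqI) (auto dest: subsetD[OF ideal_gen_superset])
  then show ?thesis
    using gen_B unfolding P_def B_def by simp
qed

section \<open>Powers of cover ideals\<close>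

definition cover_count :: "(nat \<Rightarrow> 'v set) \<Rightarrow> nat \<Rightarrow> 'v \<Rightarrow> nat" where
  "cover_count C n i = card {k. k < n \<and> i \<in> C k}"

definition covers_le :: "'v set \<Rightarrow> 'v set set \<Rightarrow> nat \<Rightarrow> ('v \<Rightarrow> nat) \<Rightarrow> bool" where
  "covers_le X E n m \<longleftrightarrow> (\<exists>C. (\<forall>k<n. vertex_cover X E (C k)) \<and> (\<forall>i. cover_count C n i \<le> m i))"

definition cover_power_exp :: "'v set \<Rightarrow> 'v set set \<Rightarrow> nat \<Rightarrow> ('v \<Rightarrow>\<^sub>0 nat) \<Rightarrow> bool" where
  "cover_power_exp X E n \<mu> \<longleftrightarrow> Poly_Mapping.keys \<mu> \<subseteq> X \<and> covers_le X E n (Poly_Mapping.lookup \<mu>)"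

lemma vertex_cover_subset: "vertex_cover X E C \<Longrightarrow> C \<subseteq> X"
  by (simp add: vertex_cover_def)

lemma cover_count_0 [simp]: "cover_count C 0 i = 0"
  by (simp add: cover_count_def)

lemma cover_count_Suc: "cover_count C (Suc n) i = cover_count C n i + of_bool (i \<in> C n)"
proof -
  have "{k. k < Suc n \<and> i \<in> C k} = {k. k < n \<and> i \<in> C k} \<union> (if i \<in> C n then {n} else {})"
    by (auto simp: less_Suc_eq)
  then show ?thesis
    unfolding cover_count_def by simp
qed

lemma cover_count_le: "cover_count C n i \<le> n"
proof -
  have "card {k. k < n \<and> i \<in> C k} \<le> card {..<n}"
    by (rule card_mono) auto
  then show ?thesis
    by (simp add: cover_count_def)
qed

lemma cover_count_upd: "cover_count (C(n := D)) n i = cover_count C n i"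
  unfolding cover_count_def by (rule arg_cong[where f = card]) auto

lemma cover_count_const: "cover_count (\<lambda>_. D) n i = (if i \<in> D then n else 0)"
  by (simp add: cover_count_def)

lemma cover_count_eq_0: "(\<And>k. k < n \<Longrightarrow> C k \<subseteq> X) \<Longrightarrow> i \<notin> X \<Longrightarrow> cover_count C n i = 0"
  unfolding cover_count_def by (auto simp: card_eq_0_iff)

lemma covers_le_0 [simp]: "covers_le X E 0 m"
  by (simp add: covers_le_def)

lemma covers_le_mono_min:
  assumes "covers_le X E n m" and "\<And>i. i \<in> X \<Longrightarrow> min (m i) n \<le> m' i"
  shows "covers_le X E n m'"
proof -
  obtain C where C: "\<forall>k<n. vertex_cover X E (C k)" "\<forall>i. cover_count C n i \<le> m i"
    using assms(1) unfolding covers_le_def by blast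
  have CX: "C k \<subseteq> X" if "k < n" for k
    using C(1) that vertex_cover_subset by blast
  have "cover_count C n i \<le> m' i" for i
  proof (cases "i \<in> X")
    case True
    then show ?thesis
      using spec[OF C(2), of i] cover_count_le[of C n i] assms(2)[OF True] by linarith
  qed (simp add: cover_count_eq_0[OF CX])
  then show ?thesis
    using C(1) unfolding covers_le_def by blast
qed

lemma covers_le_mono:
  "covers_le X E n m \<Longrightarrow> (\<And>i. i \<in> X \<Longrightarrow> m i \<le> m' i) \<Longrightarrow> covers_le X E n m'"
  by (erule covers_le_mono_min) (simp add: min.coboundedI1)

lemma covers_le_cong:
  "(\<And>i. i \<in> X \<Longrightarrow> m i = m' i) \<Longrightarrow> covers_le X E n m \<longleftrightarrow> covers_le X E n m'"
  using covers_le_mono[of X E n m m'] covers_le_mono[of X E n m' m] by auto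

lemma covers_le_Suc_iff:
  "covers_le X E (Suc n) m \<longleftrightarrow>
     (\<exists>C. vertex_cover X E C \<and> (\<forall>i\<in>C. 0 < m i) \<and> covers_le X E n (\<lambda>i. m i - of_bool (i \<in> C)))"
proof
  assume "covers_le X E (Suc n) m"
  then obtain C where C: "\<forall>k<Suc n. vertex_cover X E (C k)" "\<forall>i. cover_count C (Suc n) i \<le> m i"
    unfolding covers_le_def by blast
  then have "cover_count C n i \<le> m i - of_bool (i \<in> C n)" "i \<in> C n \<Longrightarrow> 0 < m i" for i
    by (auto simp: cover_count_Suc dest: spec[of _ i])
  then have "covers_le X E n (\<lambda>i. m i - of_bool (i \<in> C n))"
    using C(1) unfolding covers_le_def by (intro exI[of _ C]) auto
  then show "\<exists>D. vertex_cover X E D \<and> (\<forall>i\<in>D. 0 < m i) \<and> covers_le X E n (\<lambda>i. m i - of_bool (i \<in> D))"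
    using C(1) \<open>\<And>i. i \<in> C n \<Longrightarrow> 0 < m i\<close> by blast
next
  assume "\<exists>D. vertex_cover X E D \<and> (\<forall>i\<in>D. 0 < m i) \<and> covers_le X E n (\<lambda>i. m i - of_bool (i \<in> D))"
  then obtain D C where D: "vertex_cover X E D" "\<forall>i\<in>D. 0 < m i"
    and C: "\<forall>k<n. vertex_cover X E (C k)" "\<forall>i. cover_count C n i \<le> m i - of_bool (i \<in> D)"
    unfolding covers_le_def by blast
  have "cover_count (C(n := D)) (Suc n) i \<le> m i" for i
    using spec[OF C(2), of i] D(2) by (cases "i \<in> D") (auto simp: cover_count_Suc cover_count_upd)
  moreover have "\<forall>k<Suc n. vertex_cover X E ((C(n := D)) k)"
    using C(1) D(1) by (auto simp: less_Suc_eq)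
  ultimately show "covers_le X E (Suc n) m"
    unfolding covers_le_def by blast
qed

lemma covers_le_1_iff: "covers_le X E 1 m \<longleftrightarrow> (\<exists>C. vertex_cover X E C \<and> (\<forall>i\<in>C. 0 < m i))"
  using covers_le_Suc_iff[of X E 0 m] by simp

definition exp_of_set :: "'v set \<Rightarrow> 'v \<Rightarrow>\<^sub>0 nat" where
  "exp_of_set W = (\<Sum>i\<in>W. Poly_Mapping.single i 1)"

lemma lookup_exp_of_set: "finite W \<Longrightarrow> Poly_Mapping.lookup (exp_of_set W) i = of_bool (i \<in> W)"
  unfolding exp_of_set_def by (simp add: lookup_sum lookup_single when_def)

lemma keys_exp_of_set: "finite W \<Longrightarrow> Poly_Mapping.keys (exp_of_set W) = W"
  by (auto simp: in_keys_iff lookup_exp_of_set)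

lemma exp_dvd_exp_of_set_iff:
  "finite W \<Longrightarrow> exp_dvd (exp_of_set W) \<mu> \<longleftrightarrow> (\<forall>i\<in>W. 0 < Poly_Mapping.lookup \<mu> i)"
  by (auto simp: exp_dvd_def lookup_exp_of_set Suc_le_eq)

lemma prod_var_eq_single:
  "finite W \<Longrightarrow> (\<Prod>i\<in>W. var i) = (Poly_Mapping.single (exp_of_set W) 1 :: ('v, 'k::field) mpoly)"
  by (induction W rule: finite_induct) (simp_all add: exp_of_set_def var_def mult_single)

lemma cover_power_exp_keys: "cover_power_exp X E n \<mu> \<Longrightarrow> Poly_Mapping.keys \<mu> \<subseteq> X"
  by (simp add: cover_power_exp_def)

lemma cover_power_exp_upward_closed: "upward_closed X (cover_power_exp X E n)"
  unfolding upward_closed_def cover_power_exp_def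
  by (auto simp: keys_add_nat lookup_add elim: covers_le_mono)

lemma cover_power_exp_Suc_decompose:
  assumes "finite X" and "cover_power_exp X E (Suc n) \<mu>"
  shows "\<exists>\<mu>1 \<mu>2. cover_power_exp X E n \<mu>1 \<and> cover_power_exp X E 1 \<mu>2 \<and> \<mu> = \<mu>1 + \<mu>2"
proof -
  obtain C where \<mu>: "Poly_Mapping.keys \<mu> \<subseteq> X" and C: "vertex_cover X E C" "\<forall>i\<in>C. 0 < Poly_Mapping.lookup \<mu> i"
    and rest: "covers_le X E n (\<lambda>i. Poly_Mapping.lookup \<mu> i - of_bool (i \<in> C))"
    using assms(2) unfolding cover_power_exp_def covers_le_Suc_iff by blast
  have "finite C"
    by (rule finite_subset[OF vertex_cover_subset[OF C(1)] assms(1)])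
  have "\<mu> = (\<mu> - exp_of_set C) + exp_of_set C"
    using C(2) \<open>finite C\<close> by (intro poly_mapping_eqI) (auto simp: lookup_add lookup_minus lookup_exp_of_set)
  moreover have "cover_power_exp X E 1 (exp_of_set C)"
    unfolding cover_power_exp_def covers_le_1_iff keys_exp_of_set[OF \<open>finite C\<close>]
    using C(1) vertex_cover_subset[OF C(1)] by (auto simp: lookup_exp_of_set[OF \<open>finite C\<close>])
  moreover have "cover_power_exp X E n (\<mu> - exp_of_set C)"
  proof -
    have "Poly_Mapping.lookup (\<mu> - exp_of_set C) = (\<lambda>i. Poly_Mapping.lookup \<mu> i - of_bool (i \<in> C))"
      by (simp add: fun_eq_iff lookup_minus lookup_exp_of_set[OF \<open>finite C\<close>])
    then show ?thesis
      using rest subset_trans[OF keys_diff_nat_subset \<mu>] by (simp add: cover_power_exp_def)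
  qed
  ultimately show ?thesis
    by blast
qed

lemma cover_power_exp_Suc_if_dvd:
  assumes "cover_power_exp X E n \<mu>1" and "cover_power_exp X E 1 \<mu>2"
    and "Poly_Mapping.keys \<mu> \<subseteq> X" and "exp_dvd (\<mu>1 + \<mu>2) \<mu>"
  shows "cover_power_exp X E (Suc n) \<mu>"
proof -
  obtain C where C: "vertex_cover X E C" "\<forall>i\<in>C. 0 < Poly_Mapping.lookup \<mu>2 i"
    using assms(2) unfolding cover_power_exp_def covers_le_1_iff by blast
  have "Poly_Mapping.lookup \<mu>1 i \<le> Poly_Mapping.lookup \<mu> i - of_bool (i \<in> C)" for i
    using assms(4) C(2) unfolding exp_dvd_def lookup_add by (cases "i \<in> C") (fastforce dest: spec[of _ i])+
  then have "covers_le X E n (\<lambda>i. Poly_Mapping.lookup \<mu> i - of_bool (i \<in> C))"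
    using assms(1) unfolding cover_power_exp_def by (blast intro: covers_le_mono)
  moreover have "\<forall>i\<in>C. 0 < Poly_Mapping.lookup \<mu> i"
    using assms(4) C(2) unfolding exp_dvd_def lookup_add by (metis add_leD2 order_less_le_trans)
  ultimately show ?thesis
    using assms(3) C(1) unfolding cover_power_exp_def covers_le_Suc_iff by blast
qed

lemma cover_power_exp_Suc_iff:
  assumes "finite X"
  shows "cover_power_exp X E (Suc n) \<mu> \<longleftrightarrow> Poly_Mapping.keys \<mu> \<subseteq> X \<and>
    (\<exists>\<beta>\<in>{\<mu>1 + \<mu>2 | \<mu>1 \<mu>2. cover_power_exp X E n \<mu>1 \<and> cover_power_exp X E 1 \<mu>2}. exp_dvd \<beta> \<mu>)"
proof
  assume "cover_power_exp X E (Suc n) \<mu>"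
  then obtain \<mu>1 \<mu>2 where "cover_power_exp X E n \<mu>1" "cover_power_exp X E 1 \<mu>2" "\<mu> = \<mu>1 + \<mu>2"
    using cover_power_exp_Suc_decompose[OF assms] by blast
  moreover have "Poly_Mapping.keys \<mu> \<subseteq> X"
    using \<open>cover_power_exp X E (Suc n) \<mu>\<close> by (rule cover_power_exp_keys)
  ultimately show "Poly_Mapping.keys \<mu> \<subseteq> X \<and>
    (\<exists>\<beta>\<in>{\<mu>1 + \<mu>2 | \<mu>1 \<mu>2. cover_power_exp X E n \<mu>1 \<and> cover_power_exp X E 1 \<mu>2}. exp_dvd \<beta> \<mu>)"
    using exp_dvd_refl[of \<mu>] by blast
qed (use cover_power_exp_Suc_if_dvd in blast)

lemma ex_minimal_vertex_cover_subset:
  assumes "finite X" and "vertex_cover X E C"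
  shows "\<exists>W\<subseteq>C. minimal_vertex_cover X E W"
  using assms(2)
proof (induction "card C" arbitrary: C rule: less_induct)
  case less
  show ?case
  proof (cases "minimal_vertex_cover X E C")
    case False
    then obtain C' where C': "C' \<subset> C" "vertex_cover X E C'"
      using less.prems unfolding minimal_vertex_cover_def by blast
    have "finite C"
      by (rule finite_subset[OF vertex_cover_subset[OF less.prems] assms(1)])
    then obtain W where "W \<subseteq> C'" "minimal_vertex_cover X E W"
      using less.hyps[OF psubset_card_mono C'(2)] C'(1) by blast
    then show ?thesis
      using C'(1) by blast
  qed blast
qed

lemma cover_ideal_eq_monomial_ideal:
  assumes "finite X"
  shows "(cover_ideal X E :: ('v, 'k::field) mpoly set) = monomial_ideal X (cover_power_exp X E 1)"
proof -
  let ?B = "exp_of_set ` {W. minimal_vertex_cover X E W}"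
  have fin: "finite W" if "minimal_vertex_cover X E W" for W
    using that finite_subset[OF vertex_cover_subset assms] unfolding minimal_vertex_cover_def by blast
  have "{(\<Prod>i\<in>W. var i) | W. minimal_vertex_cover X E W} = (\<lambda>W. \<Prod>i\<in>W. var i) ` {W. minimal_vertex_cover X E W}"
    by (simp add: image_Collect)
  also have "\<dots> = (\<lambda>\<beta>. Poly_Mapping.single \<beta> (1::'k)) ` ?B"
    unfolding image_image by (rule image_cong) (simp_all add: fin prod_var_eq_single)
  finally have gens: "{(\<Prod>i\<in>W. var i) | W. minimal_vertex_cover X E W} = (\<lambda>\<beta>. Poly_Mapping.single \<beta> (1::'k)) ` ?B" .
  have "(cover_ideal X E :: ('v, 'k) mpoly set) =
      monomial_ideal X (\<lambda>\<mu>. Poly_Mapping.keys \<mu> \<subseteq> X \<and> (\<exists>\<beta>\<in>?B. exp_dvd \<beta> \<mu>))"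
    unfolding cover_ideal_def gens
  proof (rule ideal_gen_monomials)
    fix \<beta> assume "\<beta> \<in> ?B"
    then obtain W where "minimal_vertex_cover X E W" "\<beta> = exp_of_set W"
      by blast
    then show "Poly_Mapping.keys \<beta> \<subseteq> X"
      using fin by (simp add: keys_exp_of_set minimal_vertex_cover_def vertex_cover_def)
  qed
  also have "\<dots> = monomial_ideal X (cover_power_exp X E 1)"
  proof (rule monomial_ideal_cong)
    fix \<mu> :: "'v \<Rightarrow>\<^sub>0 nat"
    have "(\<exists>\<beta>\<in>?B. exp_dvd \<beta> \<mu>) \<longleftrightarrow> (\<exists>C. vertex_cover X E C \<and> (\<forall>i\<in>C. 0 < Poly_Mapping.lookup \<mu> i))"
      using ex_minimal_vertex_cover_subset[OF assms] fin
      by (auto simp: exp_dvd_exp_of_set_iff minimal_vertex_cover_def) (meson subsetD)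
    then show "(Poly_Mapping.keys \<mu> \<subseteq> X \<and> (\<exists>\<beta>\<in>?B. exp_dvd \<beta> \<mu>)) \<longleftrightarrow> cover_power_exp X E 1 \<mu>"
      unfolding cover_power_exp_def covers_le_1_iff by blast
  qed
  finally show ?thesis .
qed

lemma ideal_pow_cover_ideal:
  assumes "finite X"
  shows "ideal_pow (polys_in X) (cover_ideal X E :: ('v, 'k::field) mpoly set) n =
    monomial_ideal X (cover_power_exp X E n)"
proof (induction n)
  case 0
  show ?case
    by (auto simp: monomial_ideal_iff cover_power_exp_def polys_in_iff)
next
  case (Suc n)
  have "ideal_pow (polys_in X) (cover_ideal X E :: ('v, 'k) mpoly set) (Suc n) =
    ideal_gen (polys_in X) {a * b | a b. a \<in> (monomial_ideal X (cover_power_exp X E n) :: ('v, 'k) mpoly set)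
      \<and> b \<in> monomial_ideal X (cover_power_exp X E 1)}"
    by (simp only: ideal_pow.simps Suc.IH) (simp only: cover_ideal_eq_monomial_ideal[OF assms])
  also have "\<dots> = monomial_ideal X (\<lambda>\<mu>. Poly_Mapping.keys \<mu> \<subseteq> X \<and>
    (\<exists>\<beta>\<in>{\<mu>1 + \<mu>2 | \<mu>1 \<mu>2. cover_power_exp X E n \<mu>1 \<and> cover_power_exp X E 1 \<mu>2}. exp_dvd \<beta> \<mu>))"
    by (rule ideal_gen_products_monomial_ideals) (simp_all add: cover_power_exp_keys)
  also have "\<dots> = monomial_ideal X (cover_power_exp X E (Suc n))"
    by (rule monomial_ideal_cong) (rule cover_power_exp_Suc_iff[OF assms, symmetric])
  finally show ?case .
qed

section \<open>Polynomials are an integral domain\<close>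

text \<open>The library's integral domain instance for \<open>poly_mapping\<close> needs linearly ordered
  variables, so we argue directly by splitting off top-degree parts in one variable at a time.\<close>

definition deg_part :: "'v \<Rightarrow> nat \<Rightarrow> ('v, 'k::field) mpoly \<Rightarrow> ('v, 'k) mpoly" where
  "deg_part j d f = restrict_keys (\<lambda>\<tau>. Poly_Mapping.lookup \<tau> j = d) f"

definition degs :: "'v \<Rightarrow> ('v, 'k::field) mpoly \<Rightarrow> nat set" where
  "degs j f = (\<lambda>\<tau>. Poly_Mapping.lookup \<tau> j) ` Poly_Mapping.keys f"

definition homogeneous_in :: "'v \<Rightarrow> ('v, 'k::field) mpoly \<Rightarrow> bool" where
  "homogeneous_in j f \<longleftrightarrow> (\<exists>d. \<forall>\<tau>\<in>Poly_Mapping.keys f. Poly_Mapping.lookup \<tau> j = d)"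

lemma keys_deg_part:
  "Poly_Mapping.keys (deg_part j d f) = {\<tau> \<in> Poly_Mapping.keys f. Poly_Mapping.lookup \<tau> j = d}"
  by (simp add: deg_part_def keys_restrict_keys)

lemma finite_degs [simp]: "finite (degs j f)"
  by (simp add: degs_def)

lemma degs_eq_empty_iff: "degs j f = {} \<longleftrightarrow> f = 0"
  by (simp add: degs_def)

lemma le_Max_degs: "\<tau> \<in> Poly_Mapping.keys f \<Longrightarrow> Poly_Mapping.lookup \<tau> j \<le> Max (degs j f)"
  by (simp add: degs_def)

lemma Max_degs_in_degs: "f \<noteq> 0 \<Longrightarrow> Max (degs j f) \<in> degs j f"
  by (simp add: degs_eq_empty_iff)

lemma deg_part_Max_neq_0:
  assumes "f \<noteq> 0"
  shows "deg_part j (Max (degs j f)) f \<noteq> 0"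
proof -
  define d where "d = Max (degs j f)"
  have "d \<in> (\<lambda>\<tau>. Poly_Mapping.lookup \<tau> j) ` Poly_Mapping.keys f"
    using Max_degs_in_degs[OF assms] unfolding d_def degs_def .
  then obtain \<tau> where "\<tau> \<in> Poly_Mapping.keys f" "Poly_Mapping.lookup \<tau> j = d"
    by blast
  then have "\<tau> \<in> Poly_Mapping.keys (deg_part j d f)"
    by (simp add: keys_deg_part)
  then show ?thesis
    unfolding d_def by (metis empty_iff keys_zero)
qed

lemma homogeneous_in_deg_part: "homogeneous_in j (deg_part j d f)"
  by (auto simp: homogeneous_in_def keys_deg_part)

lemma homogeneous_in_deg_part_preserve: "homogeneous_in i f \<Longrightarrow> homogeneous_in i (deg_part j d f)"
  by (auto simp: homogeneous_in_def keys_deg_part)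

lemma polys_in_deg_part: "f \<in> polys_in X \<Longrightarrow> deg_part j d f \<in> polys_in X"
  by (simp add: deg_part_def polys_in_restrict_keys)

lemma deg_part_add: "deg_part j d (f + g) = deg_part j d f + deg_part j d g"
  by (simp add: deg_part_def restrict_keys_add)

lemma deg_part_split: "f = deg_part j d f + restrict_keys (\<lambda>\<tau>. Poly_Mapping.lookup \<tau> j \<noteq> d) f"
  unfolding deg_part_def by (rule restrict_keys_split)

lemma diff_deg_part: "f - deg_part j d f = restrict_keys (\<lambda>\<tau>. Poly_Mapping.lookup \<tau> j \<noteq> d) f"
  using deg_part_split[of f j d] by (simp add: algebra_simps)

lemma deg_part_deg_part: "deg_part j d (deg_part j d' f) = (if d = d' then deg_part j d f else 0)"
  unfolding deg_part_def restrict_keys_restrict_keys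
  by (auto intro: arg_cong[where f = "\<lambda>Q. restrict_keys Q f"] restrict_keys_eq_0)

lemma degs_restrict_keys_neq:
  "degs j (restrict_keys (\<lambda>\<tau>. Poly_Mapping.lookup \<tau> j \<noteq> d) f) = degs j f - {d}"
  by (auto simp: degs_def keys_restrict_keys)

lemma keys_mult_lookup:
  assumes "\<tau> \<in> Poly_Mapping.keys (f * g)"
  obtains \<sigma> \<rho> where "\<sigma> \<in> Poly_Mapping.keys f" "\<rho> \<in> Poly_Mapping.keys g"
    "\<And>j. Poly_Mapping.lookup \<tau> j = Poly_Mapping.lookup \<sigma> j + Poly_Mapping.lookup \<rho> j"
  using assms keys_mult[of f g] by (auto simp: lookup_add)

lemma degs_mult_homogeneous:
  assumes "\<forall>\<sigma>\<in>Poly_Mapping.keys f. Poly_Mapping.lookup \<sigma> j = a"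
  shows "degs j (f * g) \<subseteq> (+) a ` degs j g"
  using assms by (auto simp: degs_def elim!: keys_mult_lookup)

lemma card_degs_mult_lower_part_less:
  assumes "g \<noteq> 0"
  shows "card (degs j (deg_part j a f * (g - deg_part j (Max (degs j g)) g))) < card (degs j g)"
proof -
  let ?b = "Max (degs j g)"
  have "degs j (deg_part j a f * (g - deg_part j ?b g)) \<subseteq>
      (+) a ` degs j (restrict_keys (\<lambda>\<tau>. Poly_Mapping.lookup \<tau> j \<noteq> ?b) g)"
    unfolding diff_deg_part by (rule degs_mult_homogeneous) (simp add: keys_deg_part)
  then have "degs j (deg_part j a f * (g - deg_part j ?b g)) \<subseteq> (+) a ` (degs j g - {?b})"
    by (simp only: degs_restrict_keys_neq)
  then have "card (degs j (deg_part j a f * (g - deg_part j ?b g))) \<le> card (degs j g - {?b})"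
    by (meson card_image_le card_mono finite_Diff finite_degs finite_imageI order_trans)
  also have "\<dots> < card (degs j g)"
    by (rule card_Diff1_less[OF finite_degs Max_degs_in_degs[OF assms]])
  finally show ?thesis .
qed

lemma deg_part_mult_top:
  fixes f g :: "('v, 'k::field) mpoly"
  assumes f: "\<forall>\<sigma>\<in>Poly_Mapping.keys f. Poly_Mapping.lookup \<sigma> j \<le> a"
    and g: "\<forall>\<rho>\<in>Poly_Mapping.keys g. Poly_Mapping.lookup \<rho> j \<le> b"
  shows "deg_part j (a + b) (f * g) = deg_part j a f * deg_part j b g"
proof -
  define f' where "f' = restrict_keys (\<lambda>\<tau>. Poly_Mapping.lookup \<tau> j \<noteq> a) f"
  define g' where "g' = restrict_keys (\<lambda>\<tau>. Poly_Mapping.lookup \<tau> j \<noteq> b) g"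
  have lower: "deg_part j (a + b) (p * q) = 0"
    if "\<forall>\<sigma>\<in>Poly_Mapping.keys p. Poly_Mapping.lookup \<sigma> j \<le> a"
      "\<forall>\<rho>\<in>Poly_Mapping.keys q. Poly_Mapping.lookup \<rho> j \<le> b"
      "(\<forall>\<sigma>\<in>Poly_Mapping.keys p. Poly_Mapping.lookup \<sigma> j < a) \<or>
       (\<forall>\<rho>\<in>Poly_Mapping.keys q. Poly_Mapping.lookup \<rho> j < b)"
    for p q :: "('v, 'k) mpoly"
    unfolding deg_part_def using that
    by (intro restrict_keys_eq_0) (elim keys_mult_lookup, fastforce)
  have top: "deg_part j (a + b) (deg_part j a f * deg_part j b g) = deg_part j a f * deg_part j b g"
    unfolding deg_part_def
    by (rule restrict_keys_id) (auto simp: keys_restrict_keys elim!: keys_mult_lookup)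
  have fs: "deg_part j a f + f' = f" and gs: "deg_part j b g + g' = g"
    unfolding f'_def g'_def by (rule deg_part_split[symmetric])+
  have "f * g = deg_part j a f * g + f' * g"
    by (simp only: fs flip: distrib_right)
  also have "deg_part j a f * g = deg_part j a f * deg_part j b g + deg_part j a f * g'"
    by (simp only: gs flip: distrib_left)
  finally have "f * g = deg_part j a f * deg_part j b g + deg_part j a f * g' + f' * g" .
  moreover have "deg_part j (a + b) (deg_part j a f * g') = 0"
    using f g by (intro lower) (auto simp: g'_def keys_deg_part keys_restrict_keys)
  moreover have "deg_part j (a + b) (f' * g) = 0"
    using f g by (intro lower) (auto simp: f'_def keys_restrict_keys)
  ultimately show ?thesis
    using top by (simp add: deg_part_add)
qed

lemma single_if_homogeneous:
  assumes "f \<in> polys_in X" and "\<forall>j\<in>X. homogeneous_in j f" and "\<kappa> \<in> Poly_Mapping.keys f"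
  shows "f = Poly_Mapping.single \<kappa> (Poly_Mapping.lookup f \<kappa>)"
proof (rule poly_mapping_eqI)
  fix \<sigma>
  have "\<sigma> = \<kappa>" if "\<sigma> \<in> Poly_Mapping.keys f"
    using assms that unfolding homogeneous_in_def polys_in_iff by (intro exps_eqI[of _ X]) metis+
  then show "Poly_Mapping.lookup f \<sigma> = Poly_Mapping.lookup (Poly_Mapping.single \<kappa> (Poly_Mapping.lookup f \<kappa>)) \<sigma>"
    by (cases "\<sigma> = \<kappa>") (auto simp: lookup_single_if in_keys_iff)
qed

lemma mult_neq_0_if_homogeneous_outside:
  assumes "finite Z"
  shows "f \<in> polys_in X \<Longrightarrow> g \<in> polys_in X \<Longrightarrow> f \<noteq> 0 \<Longrightarrow> g \<noteq> 0 \<Longrightarrow>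
    \<forall>j\<in>X - Z. homogeneous_in j f \<and> homogeneous_in j g \<Longrightarrow> f * g \<noteq> (0 :: ('v, 'k::field) mpoly)"
  using assms
proof (induction Z arbitrary: f g rule: finite_induct)
  case empty
  obtain \<kappa> \<rho> where \<kappa>: "\<kappa> \<in> Poly_Mapping.keys f" and \<rho>: "\<rho> \<in> Poly_Mapping.keys g"
    using empty.prems(3,4) by (auto simp flip: keys_eq_empty)
  have "f = Poly_Mapping.single \<kappa> (Poly_Mapping.lookup f \<kappa>)"
    using single_if_homogeneous[OF empty.prems(1) _ \<kappa>] empty.prems(5) by simp
  moreover have "g = Poly_Mapping.single \<rho> (Poly_Mapping.lookup g \<rho>)"
    using single_if_homogeneous[OF empty.prems(2) _ \<rho>] empty.prems(5) by simp
  moreover have "Poly_Mapping.lookup f \<kappa> * Poly_Mapping.lookup g \<rho> \<noteq> 0"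
    using \<kappa> \<rho> by (simp add: in_keys_iff)
  ultimately show ?case
    by (metis mult_single lookup_single_eq lookup_zero)
next
  case (insert z Z)
  define a b where "a = Max (degs z f)" and "b = Max (degs z g)"
  have "deg_part z a f * deg_part z b g \<noteq> 0"
    using insert.prems unfolding a_def b_def
    by (intro insert.IH polys_in_deg_part deg_part_Max_neq_0)
       (auto intro: homogeneous_in_deg_part homogeneous_in_deg_part_preserve simp: homogeneous_in_deg_part)
  then have "deg_part z (a + b) (f * g) \<noteq> 0"
    unfolding a_def b_def by (subst deg_part_mult_top) (auto intro: le_Max_degs)
  then show ?case
    by (auto simp: deg_part_def)
qed

lemma mult_neq_0:
  fixes f g :: "('v, 'k::field) mpoly"
  assumes "finite X" "f \<in> polys_in X" "g \<in> polys_in X" "f \<noteq> 0" "g \<noteq> 0"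
  shows "f * g \<noteq> 0"
  using mult_neq_0_if_homogeneous_outside[OF assms(1) assms(2-5)] by blast

section \<open>Associated primes of monomial ideals\<close>

definition colon :: "'v set \<Rightarrow> (('v \<Rightarrow>\<^sub>0 nat) \<Rightarrow> bool) \<Rightarrow> ('v, 'k::field) mpoly \<Rightarrow> ('v, 'k) mpoly set" where
  "colon X M g = {f \<in> polys_in X. f * g \<in> monomial_ideal X M}"

definition has_var_in :: "'v set \<Rightarrow> ('v \<Rightarrow>\<^sub>0 nat) \<Rightarrow> bool" where
  "has_var_in A \<mu> \<longleftrightarrow> (\<exists>a\<in>A. 0 < Poly_Mapping.lookup \<mu> a)"

definition var_prime :: "'v set \<Rightarrow> 'v set \<Rightarrow> ('v, 'k::field) mpoly set" where
  "var_prime X A = monomial_ideal X (has_var_in A)"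

lemma has_var_in_add: "has_var_in A (\<mu> + \<nu>) \<longleftrightarrow> has_var_in A \<mu> \<or> has_var_in A \<nu>"
  by (auto simp: has_var_in_def lookup_add)

lemma has_var_in_single: "has_var_in A (Poly_Mapping.single a k) \<longleftrightarrow> a \<in> A \<and> 0 < k"
  by (auto simp: has_var_in_def lookup_single_if)

lemma has_var_in_restrict_keys:
  "A \<subseteq> Y \<Longrightarrow> has_var_in A (restrict_keys (\<lambda>i. i \<in> Y) \<nu>) \<longleftrightarrow> has_var_in A \<nu>"
  by (auto simp: has_var_in_def lookup_restrict_keys)

lemma has_var_in_upward_closed: "upward_closed X (has_var_in A)"
  by (simp add: upward_closed_def has_var_in_add)

lemma colon_subset: "colon X M g \<subseteq> polys_in X"
  by (auto simp: colon_def)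

lemma colon_mult_left:
  assumes "upward_closed X M" and "p \<in> polys_in X" and "h \<in> colon X M g"
  shows "p * h \<in> colon X M g"
proof -
  have "h \<in> polys_in X" "h * g \<in> monomial_ideal X M"
    using assms(3) by (simp_all add: colon_def)
  then show ?thesis
    using ideal_mult_left[OF monomial_ideal_is_ideal[OF assms(1)] assms(2)] polys_in_mult[OF assms(2)]
    by (simp add: colon_def mult.assoc)
qed

lemma colon_single_eq_monomial_ideal_iff:
  assumes "Poly_Mapping.keys \<kappa> \<subseteq> X"
  shows "(colon X M (Poly_Mapping.single \<kappa> 1) :: ('v, 'k::field) mpoly set) = monomial_ideal X N \<longleftrightarrow>
    (\<forall>\<nu>. Poly_Mapping.keys \<nu> \<subseteq> X \<longrightarrow> (M (\<nu> + \<kappa>) \<longleftrightarrow> N \<nu>))"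
proof
  assume eq: "(colon X M (Poly_Mapping.single \<kappa> 1) :: ('v, 'k) mpoly set) = monomial_ideal X N"
  show "\<forall>\<nu>. Poly_Mapping.keys \<nu> \<subseteq> X \<longrightarrow> (M (\<nu> + \<kappa>) \<longleftrightarrow> N \<nu>)"
  proof (intro allI impI)
    fix \<nu> :: "'v \<Rightarrow>\<^sub>0 nat" assume \<nu>: "Poly_Mapping.keys \<nu> \<subseteq> X"
    have "M (\<nu> + \<kappa>) \<longleftrightarrow> (Poly_Mapping.single \<nu> 1 :: ('v, 'k) mpoly) \<in> colon X M (Poly_Mapping.single \<kappa> 1)"
      using \<nu> assms by (simp add: colon_def polys_in_single mult_single_in_monomial_ideal_iff)
    also have "\<dots> \<longleftrightarrow> N \<nu>"
      using \<nu> by (simp add: eq single_in_monomial_ideal_iff)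
    finally show "M (\<nu> + \<kappa>) \<longleftrightarrow> N \<nu>" .
  qed
next
  assume iff: "\<forall>\<nu>. Poly_Mapping.keys \<nu> \<subseteq> X \<longrightarrow> (M (\<nu> + \<kappa>) \<longleftrightarrow> N \<nu>)"
  show "(colon X M (Poly_Mapping.single \<kappa> 1) :: ('v, 'k) mpoly set) = monomial_ideal X N"
  proof (intro set_eqI)
    fix f :: "('v, 'k) mpoly"
    show "f \<in> colon X M (Poly_Mapping.single \<kappa> 1) \<longleftrightarrow> f \<in> monomial_ideal X N"
    proof (cases "f \<in> polys_in X")
      case True
      then have "f \<in> colon X M (Poly_Mapping.single \<kappa> 1) \<longleftrightarrow> (\<forall>\<tau>\<in>Poly_Mapping.keys f. M (\<tau> + \<kappa>))"
        by (simp add: colon_def mult_single_in_monomial_ideal_iff[OF assms True])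
      also have "\<dots> \<longleftrightarrow> f \<in> monomial_ideal X N"
        using True iff by (simp add: polys_in_iff monomial_ideal_iff)
      finally show ?thesis .
    qed (simp add: colon_def monomial_ideal_iff)
  qed
qed

lemma restrict_keys_mult:
  fixes f g :: "('v, 'k::field) mpoly"
  assumes "\<And>\<sigma> \<rho>. Q (\<sigma> + \<rho>) \<longleftrightarrow> Q \<sigma> \<and> Q \<rho>"
  shows "restrict_keys Q (f * g) = restrict_keys Q f * restrict_keys Q g"
proof -
  define f' g' where "f' = restrict_keys (\<lambda>\<tau>. \<not> Q \<tau>) f" and "g' = restrict_keys (\<lambda>\<tau>. \<not> Q \<tau>) g"
  have vanish: "restrict_keys Q (p * q) = 0" if "(\<forall>\<sigma>\<in>Poly_Mapping.keys p. \<not> Q \<sigma>) \<or> (\<forall>\<rho>\<in>Poly_Mapping.keys q. \<not> Q \<rho>)"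
    for p q :: "('v, 'k) mpoly"
    using that assms keys_mult[of p q] by (intro restrict_keys_eq_0) blast
  have "f * g = restrict_keys Q f * restrict_keys Q g + restrict_keys Q f * g' + f' * g"
    using restrict_keys_split[of f Q] restrict_keys_split[of g Q] unfolding f'_def g'_def
    by (metis distrib_left distrib_right)
  moreover have "restrict_keys Q (restrict_keys Q f * restrict_keys Q g) = restrict_keys Q f * restrict_keys Q g"
    using assms keys_mult[of "restrict_keys Q f" "restrict_keys Q g"]
    by (intro restrict_keys_id) (auto simp: keys_restrict_keys)
  moreover have "restrict_keys Q (restrict_keys Q f * g') = 0" "restrict_keys Q (f' * g) = 0"
    by (auto intro!: vanish simp: f'_def g'_def keys_restrict_keys)
  ultimately show ?thesis
    by (simp add: restrict_keys_add)
qed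

lemma in_var_prime_iff:
  "f \<in> var_prime X A \<longleftrightarrow> f \<in> polys_in X \<and> restrict_keys (\<lambda>\<tau>. \<not> has_var_in A \<tau>) f = 0"
  by (auto simp: var_prime_def monomial_ideal_iff keys_restrict_keys simp flip: keys_eq_empty)

lemma var_prime_is_prime:
  assumes "finite X"
  shows "is_prime_in (polys_in X) (var_prime X A :: ('v, 'k::field) mpoly set)"
proof -
  let ?Q = "\<lambda>\<tau>. \<not> has_var_in A \<tau>"
  have "a \<in> var_prime X A \<or> b \<in> var_prime X A"
    if "a \<in> polys_in X" "b \<in> polys_in X" "a * b \<in> var_prime X A" for a b :: "('v, 'k) mpoly"
  proof -
    have "restrict_keys ?Q a * restrict_keys ?Q b = 0"
      using that(3) by (simp add: in_var_prime_iff restrict_keys_mult has_var_in_add)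
    then show ?thesis
      using that(1,2) mult_neq_0[OF assms polys_in_restrict_keys polys_in_restrict_keys]
      by (auto simp: in_var_prime_iff)
  qed
  moreover have "(1 :: ('v, 'k) mpoly) \<notin> var_prime X A"
    by (simp add: var_prime_def monomial_ideal_iff has_var_in_def)
  ultimately show ?thesis
    unfolding is_prime_in_def var_prime_def
    using monomial_ideal_is_ideal[OF has_var_in_upward_closed] polys_in_1 by blast
qed

lemma single_single_eq_var_power:
  "Poly_Mapping.single (Poly_Mapping.single a k) 1 = (var a :: ('v, 'k::field) mpoly) ^ k"
proof (induction k)
  case (Suc k)
  have "Poly_Mapping.single (Poly_Mapping.single a (Suc k)) 1 =
      Poly_Mapping.single (Poly_Mapping.single a 1 + Poly_Mapping.single a k) ((1::'k) * 1)"
    by (simp flip: single_add)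
  also have "\<dots> = var a * Poly_Mapping.single (Poly_Mapping.single a k) 1"
    by (simp only: mult_single var_def)
  finally show ?case
    by (simp add: Suc.IH)
qed simp

lemma single_one_eq_prod_var_power:
  "Poly_Mapping.single \<kappa> 1 =
    (\<Prod>a\<in>Poly_Mapping.keys \<kappa>. (var a :: ('v, 'k::field) mpoly) ^ Poly_Mapping.lookup \<kappa> a)"
proof -
  have "Poly_Mapping.single (\<Sum>a\<in>A. Poly_Mapping.single a (n a)) 1 = (\<Prod>a\<in>A. (var a :: ('v, 'k) mpoly) ^ n a)"
    if "finite A" for A and n :: "'v \<Rightarrow> nat"
    using that
  proof (induction A rule: finite_induct)
    case (insert x F)
    have "Poly_Mapping.single (\<Sum>a\<in>insert x F. Poly_Mapping.single a (n a)) (1::'k) =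
        Poly_Mapping.single (Poly_Mapping.single x (n x)) 1 * Poly_Mapping.single (\<Sum>a\<in>F. Poly_Mapping.single a (n a)) 1"
      by (simp only: sum.insert[OF insert(1,2)] mult_single mult_1)
    also have "\<dots> = var x ^ n x * (\<Prod>a\<in>F. var a ^ n a)"
      by (simp only: single_single_eq_var_power insert.IH)
    finally show ?case
      by (simp add: insert(1,2))
  qed simp
  then show ?thesis
    by (subst poly_mapping_sum_single[of \<kappa>]) simp
qed

context
  fixes X :: "'v set" and P :: "('v, 'k::field) mpoly set"
  assumes prime: "is_prime_in (polys_in X) P"
begin

lemma single_in_prime_iff:
  assumes "Poly_Mapping.keys \<tau> \<subseteq> X"
  shows "Poly_Mapping.single \<tau> 1 \<in> P \<longleftrightarrow> has_var_in {a \<in> X. var a \<in> P} \<tau>"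
proof
  assume single: "Poly_Mapping.single \<tau> 1 \<in> P"
  have "\<And>a. a \<in> Poly_Mapping.keys \<tau> \<Longrightarrow> var a ^ Poly_Mapping.lookup \<tau> a \<in> polys_in X"
    using assms by (intro polys_in_power polys_in_var) blast
  moreover have "(\<Prod>a\<in>Poly_Mapping.keys \<tau>. var a ^ Poly_Mapping.lookup \<tau> a) \<in> P"
    using single by (simp only: single_one_eq_prod_var_power)
  ultimately have "\<exists>a\<in>Poly_Mapping.keys \<tau>. var a ^ Poly_Mapping.lookup \<tau> a \<in> P"
    by (rule prime_prod_dest[OF prime finite_keys])
  then obtain a where "a \<in> Poly_Mapping.keys \<tau>" "var a ^ Poly_Mapping.lookup \<tau> a \<in> P"
    by blast
  moreover have "a \<in> X"
    using assms calculation(1) by blast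
  ultimately show "has_var_in {a \<in> X. var a \<in> P} \<tau>"
    using prime_power_dest[OF prime polys_in_var] by (auto simp: has_var_in_def in_keys_iff)
next
  assume "has_var_in {a \<in> X. var a \<in> P} \<tau>"
  then obtain a where a: "a \<in> X" "var a \<in> P" "0 < Poly_Mapping.lookup \<tau> a"
    by (auto simp: has_var_in_def)
  then have "Poly_Mapping.single a 1 + (\<tau> - Poly_Mapping.single a 1) = \<tau>"
    by (intro poly_mapping_eqI) (simp add: lookup_add lookup_minus lookup_single_if)
  then have "Poly_Mapping.single \<tau> 1 = var a * Poly_Mapping.single (\<tau> - Poly_Mapping.single a 1) (1::'k)"
    by (metis var_def mult_single mult_1)
  moreover have "Poly_Mapping.single (\<tau> - Poly_Mapping.single a 1) 1 \<in> polys_in X"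
    by (rule polys_in_single[OF subset_trans[OF keys_diff_nat_subset assms]])
  ultimately show "Poly_Mapping.single \<tau> 1 \<in> P"
    using ideal_mult_right[OF prime_is_ideal[OF prime] _ a(2)] by simp
qed

lemma prime_eq_var_prime:
  assumes "\<And>f \<tau>. f \<in> P \<Longrightarrow> \<tau> \<in> Poly_Mapping.keys f \<Longrightarrow> Poly_Mapping.single \<tau> 1 \<in> P"
  shows "P = var_prime X {a \<in> X. var a \<in> P}"
proof (intro set_eqI iffI)
  fix f :: "('v, 'k) mpoly" assume "f \<in> P"
  then show "f \<in> var_prime X {a \<in> X. var a \<in> P}"
    using assms ideal_subset[OF prime_is_ideal[OF prime]] single_in_prime_iff
    by (auto simp: var_prime_def monomial_ideal_iff polys_in_iff)
next
  fix f :: "('v, 'k) mpoly" assume "f \<in> var_prime X {a \<in> X. var a \<in> P}"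
  then have f: "f \<in> polys_in X" "\<forall>\<tau>\<in>Poly_Mapping.keys f. has_var_in {a \<in> X. var a \<in> P} \<tau>"
    by (simp_all add: var_prime_def monomial_ideal_iff)
  show "f \<in> P"
  proof (rule ideal_if_monomials[OF prime_is_ideal[OF prime] f(1)])
    fix \<tau> assume "\<tau> \<in> Poly_Mapping.keys f"
    then show "Poly_Mapping.single \<tau> 1 \<in> P"
      using f single_in_prime_iff by (simp add: polys_in_iff)
  qed
qed

end

lemma restrict_keys_agreeing_eq_single:
  assumes "f \<in> polys_in X" and "\<tau> \<in> Poly_Mapping.keys f"
  shows "restrict_keys (\<lambda>\<sigma>. \<forall>j\<in>X. Poly_Mapping.lookup \<sigma> j = Poly_Mapping.lookup \<tau> j) f =
    Poly_Mapping.single \<tau> (Poly_Mapping.lookup f \<tau>)"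
proof (rule poly_mapping_eqI)
  fix \<sigma>
  have "\<sigma> = \<tau>" if "\<sigma> \<in> Poly_Mapping.keys f" "\<forall>j\<in>X. Poly_Mapping.lookup \<sigma> j = Poly_Mapping.lookup \<tau> j"
    using assms that by (intro exps_eqI[of _ X]) (auto simp: polys_in_iff)
  then show "Poly_Mapping.lookup (restrict_keys (\<lambda>\<sigma>. \<forall>j\<in>X. Poly_Mapping.lookup \<sigma> j = Poly_Mapping.lookup \<tau> j) f) \<sigma> =
      Poly_Mapping.lookup (Poly_Mapping.single \<tau> (Poly_Mapping.lookup f \<tau>)) \<sigma>"
    by (auto simp: lookup_restrict_keys lookup_single_if in_keys_iff)
qed

text \<open>Associated primes of a monomial ideal \<open>I\<close> are themselves monomial: if \<open>P = (I : g)\<close>, then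
  \<open>P\<close> contains each homogeneous part (in every variable) of each of its elements.\<close>

context
  fixes X :: "'v set" and M :: "('v \<Rightarrow>\<^sub>0 nat) \<Rightarrow> bool" and P :: "('v, 'k::field) mpoly set"
  assumes finite: "finite X" and upward_closed: "upward_closed X M"
    and prime: "is_prime_in (polys_in X) P"
begin

lemma colon_mult_diff_eq:
  assumes "colon X M g = P" "g \<in> polys_in X" "a \<in> polys_in X" "a \<notin> P" "b \<in> polys_in X"
    and "a * b \<in> monomial_ideal X M"
  shows "colon X M (a * (g - b)) = P"
proof (intro set_eqI)
  fix h :: "('v, 'k) mpoly"
  show "h \<in> colon X M (a * (g - b)) \<longleftrightarrow> h \<in> P"
  proof (cases "h \<in> polys_in X")
    case True
    note I = monomial_ideal_is_ideal[OF upward_closed, where 'k = 'k]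
    have "h * (a * (g - b)) = h * a * g - h * (a * b)"
      by (simp add: algebra_simps)
    then have "h * (a * (g - b)) \<in> monomial_ideal X M \<longleftrightarrow> h * a * g \<in> monomial_ideal X M"
      using ideal_diff_iff[OF I ideal_mult_left[OF I True assms(6)]] by simp
    also have "\<dots> \<longleftrightarrow> h * a \<in> P"
      using assms(1) polys_in_mult[OF True assms(3)] by (auto simp: colon_def)
    also have "\<dots> \<longleftrightarrow> h \<in> P"
      using prime_mult_dest[OF prime True assms(3)] assms(4) ideal_mult_right[OF prime_is_ideal[OF prime] assms(3)]
      by blast
    finally show ?thesis
      using True by (simp add: colon_def)
  next
    case False
    then show ?thesis
      using assms(1) colon_subset ideal_subset[OF prime_is_ideal[OF prime]] by blast
  qed
qed

lemma colon_eq_prime_neq_0: "colon X M g = P \<Longrightarrow> g \<noteq> 0"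
  using one_notin_prime[OF prime] by (auto simp: colon_def monomial_ideal_iff)

lemma deg_part_Max_in_prime:
  assumes "g \<in> polys_in X" "colon X M g = P" "f \<in> P"
  shows "deg_part j (Max (degs j f)) f \<in> P"
  using assms(1,2)
proof (induction "card (degs j g)" arbitrary: g rule: less_induct)
  case less
  show ?case
  proof (rule ccontr)
    define a b where "a = Max (degs j f)" and "b = Max (degs j g)"
    assume "deg_part j (Max (degs j f)) f \<notin> P"
    then have "f \<noteq> 0" "deg_part j a f \<notin> P"
      using ideal_0[OF prime_is_ideal[OF prime]] by (auto simp: a_def deg_part_def)
    have f: "f \<in> polys_in X"
      by (rule ideal_subset[OF prime_is_ideal[OF prime] assms(3)])
    have "f * g \<in> monomial_ideal X M"
      using less.prems assms(3) by (auto simp: colon_def)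
    then have "deg_part j (a + b) (f * g) \<in> monomial_ideal X M"
      unfolding deg_part_def by (rule restrict_keys_in_monomial_ideal)
    then have top: "deg_part j a f * deg_part j b g \<in> monomial_ideal X M"
      unfolding a_def b_def by (subst (asm) deg_part_mult_top) (auto intro: le_Max_degs)
    have "colon X M (deg_part j a f * (g - deg_part j b g)) = P"
      using colon_mult_diff_eq less.prems \<open>deg_part j a f \<notin> P\<close> top
      by (simp add: polys_in_deg_part f)
    moreover have "card (degs j (deg_part j a f * (g - deg_part j b g))) < card (degs j g)"
      unfolding b_def by (rule card_degs_mult_lower_part_less[OF colon_eq_prime_neq_0[OF less.prems(2)]])
    ultimately have "deg_part j a f \<in> P"
      using less.hyps less.prems(1) f by (fastforce simp: a_def intro: polys_in_mult polys_in_diff polys_in_deg_part)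
    with \<open>deg_part j a f \<notin> P\<close> show False ..
  qed
qed

lemma deg_part_in_prime:
  assumes "g \<in> polys_in X" "colon X M g = P" "f \<in> P"
  shows "deg_part j d f \<in> P"
  using assms(3)
proof (induction "card (degs j f)" arbitrary: f rule: less_induct)
  case less
  note ideal = prime_is_ideal[OF prime]
  show ?case
  proof (cases "f = 0")
    case False
    define a where "a = Max (degs j f)"
    define f' where "f' = restrict_keys (\<lambda>\<tau>. Poly_Mapping.lookup \<tau> j \<noteq> a) f"
    have top: "deg_part j a f \<in> P"
      unfolding a_def by (rule deg_part_Max_in_prime[OF assms(1,2) less.prems])
    then have "f' \<in> P"
      using ideal_diff[OF ideal less.prems top] by (simp add: f'_def diff_deg_part)
    moreover have "card (degs j f') < card (degs j f)"
      unfolding f'_def degs_restrict_keys_neq a_def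
      by (rule card_Diff1_less[OF finite_degs Max_degs_in_degs[OF False]])
    ultimately have "deg_part j d f' \<in> P"
      using less.hyps by blast
    moreover have "deg_part j d (deg_part j a f) \<in> P"
      using top ideal_0[OF ideal] by (simp add: deg_part_deg_part)
    ultimately show ?thesis
      using ideal_add[OF ideal] deg_part_split[of f j a] by (metis f'_def deg_part_add add.commute)
  qed (simp add: deg_part_def ideal_0[OF ideal])
qed

lemma single_in_prime_if_in_keys:
  assumes "g \<in> polys_in X" "colon X M g = P" "f \<in> P" "\<tau> \<in> Poly_Mapping.keys f"
  shows "Poly_Mapping.single \<tau> 1 \<in> P"
proof -
  note ideal = prime_is_ideal[OF prime]
  have agree: "restrict_keys (\<lambda>\<sigma>. \<forall>j\<in>Z. Poly_Mapping.lookup \<sigma> j = Poly_Mapping.lookup \<tau> j) f \<in> P"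
    if "finite Z" for Z
    using that
  proof (induction Z rule: finite_induct)
    case (insert z Z)
    have "restrict_keys (\<lambda>\<sigma>. \<forall>j\<in>insert z Z. Poly_Mapping.lookup \<sigma> j = Poly_Mapping.lookup \<tau> j) f =
      deg_part z (Poly_Mapping.lookup \<tau> z)
        (restrict_keys (\<lambda>\<sigma>. \<forall>j\<in>Z. Poly_Mapping.lookup \<sigma> j = Poly_Mapping.lookup \<tau> j) f)"
      unfolding deg_part_def restrict_keys_restrict_keys by (rule arg_cong[where f = "\<lambda>Q. restrict_keys Q f"]) auto
    then show ?case
      using deg_part_in_prime[OF assms(1,2) insert.IH] by simp
  qed (simp add: restrict_keys_id assms(3))
  have "Poly_Mapping.single \<tau> (Poly_Mapping.lookup f \<tau>) \<in> P"
    using agree[OF finite]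
    unfolding restrict_keys_agreeing_eq_single[OF ideal_subset[OF ideal assms(3)] assms(4)] .
  then have "Poly_Mapping.single 0 (inverse (Poly_Mapping.lookup f \<tau>)) * Poly_Mapping.single \<tau> (Poly_Mapping.lookup f \<tau>) \<in> P"
    by (rule ideal_mult_left[OF ideal polys_in_const])
  then show ?thesis
    using assms(4) by (simp add: mult_single in_keys_iff)
qed

text \<open>By primality, \<open>P\<close> is already the colon ideal of a single term of \<open>g\<close>.\<close>

lemma ex_colon_single_subset:
  assumes "g \<in> polys_in X" "colon X M g = P"
  shows "\<exists>\<kappa>\<in>Poly_Mapping.keys g. colon X M (Poly_Mapping.single \<kappa> 1) \<subseteq> P"
proof (rule ccontr)
  note I = monomial_ideal_is_ideal[OF upward_closed, where 'k = 'k]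
  assume "\<not> ?thesis"
  then have "\<forall>\<kappa>\<in>Poly_Mapping.keys g. \<exists>h. h \<in> colon X M (Poly_Mapping.single \<kappa> 1) \<and> h \<notin> P"
    by blast
  then obtain h where h: "\<And>\<kappa>. \<kappa> \<in> Poly_Mapping.keys g \<Longrightarrow> h \<kappa> \<in> colon X M (Poly_Mapping.single \<kappa> 1) \<and> h \<kappa> \<notin> P"
    by metis
  define H where "H = (\<Prod>\<kappa>\<in>Poly_Mapping.keys g. h \<kappa>)"
  have h_polys: "h \<kappa> \<in> polys_in X" if "\<kappa> \<in> Poly_Mapping.keys g" for \<kappa>
    using h[OF that] colon_subset by blast
  then have H: "H \<in> polys_in X"
    unfolding H_def by (rule polys_in_prod)
  have H_notin: "H \<notin> P"
  proof
    assume "H \<in> P"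
    then have "(\<Prod>\<kappa>\<in>Poly_Mapping.keys g. h \<kappa>) \<in> P"
      unfolding H_def .
    with h_polys have "\<exists>\<kappa>\<in>Poly_Mapping.keys g. h \<kappa> \<in> P"
      by (rule prime_prod_dest[OF prime finite_keys])
    then show False
      using h by blast
  qed
  have H_colon: "H \<in> colon X M (Poly_Mapping.single \<kappa> 1)" if "\<kappa> \<in> Poly_Mapping.keys g" for \<kappa>
  proof -
    have "H = (\<Prod>\<kappa>'\<in>Poly_Mapping.keys g - {\<kappa>}. h \<kappa>') * h \<kappa>"
      unfolding H_def prod.remove[OF finite_keys that] by (simp add: mult.commute)
    moreover have "(\<Prod>\<kappa>'\<in>Poly_Mapping.keys g - {\<kappa>}. h \<kappa>') \<in> polys_in X"
      using h_polys by (intro polys_in_prod) blast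
    ultimately show ?thesis
      using colon_mult_left[OF upward_closed _ conjunct1[OF h[OF that]]] by simp
  qed
  have "H * g \<in> monomial_ideal X M"
  proof (rule ideal_mult_if_mult_monomials[OF I])
    fix \<kappa> assume "\<kappa> \<in> Poly_Mapping.keys g"
    then show "H * Poly_Mapping.single \<kappa> 1 \<in> monomial_ideal X M"
      using H_colon by (simp add: colon_def)
  qed
  then show False
    using assms(2) H H_notin by (auto simp: colon_def)
qed

lemma ex_colon_single_eq:
  assumes "g \<in> polys_in X" "colon X M g = P"
  shows "\<exists>\<kappa>. Poly_Mapping.keys \<kappa> \<subseteq> X \<and> colon X M (Poly_Mapping.single \<kappa> 1) = P"
proof -
  obtain \<kappa> where \<kappa>: "\<kappa> \<in> Poly_Mapping.keys g" and sub: "colon X M (Poly_Mapping.single \<kappa> 1) \<subseteq> P"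
    using ex_colon_single_subset[OF assms] by blast
  have \<kappa>X: "Poly_Mapping.keys \<kappa> \<subseteq> X"
    using assms(1) \<kappa> by (simp add: polys_in_iff)
  have "f \<in> colon X M (Poly_Mapping.single \<kappa> 1)" if f: "f \<in> P" for f
  proof -
    have f_polys: "f \<in> polys_in X"
      by (rule ideal_subset[OF prime_is_ideal[OF prime] f])
    have "M (\<tau> + \<kappa>)" if \<tau>: "\<tau> \<in> Poly_Mapping.keys f" for \<tau>
    proof -
      have \<tau>X: "Poly_Mapping.keys \<tau> \<subseteq> X"
        using f_polys \<tau> by (simp add: polys_in_iff)
      have "Poly_Mapping.single \<tau> 1 * g \<in> monomial_ideal X M"
        using single_in_prime_if_in_keys[OF assms f \<tau>] assms(2) by (auto simp: colon_def)
      then show ?thesis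
        using \<kappa> mult_single_in_monomial_ideal_iff[OF \<tau>X assms(1), of M]
        by (simp add: mult.commute add.commute)
    qed
    then show ?thesis
      using f_polys by (simp add: colon_def mult_single_in_monomial_ideal_iff[OF \<kappa>X f_polys])
  qed
  then show ?thesis
    using \<kappa>X sub by blast
qed

end

text \<open>\<open>A\<close> spans an associated prime of the monomial ideal \<open>I\<close> given by \<open>M\<close>, witnessed by \<open>x\<^sup>\<mu>\<close>:
  \<open>(I : x\<^sup>\<mu>) = (x\<^sub>a : a \<in> A)\<close>.\<close>

definition monomial_ass_set :: "'v set \<Rightarrow> (('v \<Rightarrow>\<^sub>0 nat) \<Rightarrow> bool) \<Rightarrow> 'v set \<Rightarrow> bool" where
  "monomial_ass_set X M A \<longleftrightarrow>
    (\<exists>\<mu>. Poly_Mapping.keys \<mu> \<subseteq> X \<and> (\<forall>\<nu>. Poly_Mapping.keys \<nu> \<subseteq> X \<longrightarrow> (M (\<mu> + \<nu>) \<longleftrightarrow> has_var_in A \<nu>)))"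

lemma Ass_monomial_ideal:
  assumes "finite X" and "upward_closed X M"
  shows "Ass (polys_in X) (monomial_ideal X M :: ('v, 'k::field) mpoly set) =
    var_prime X ` {A. A \<subseteq> X \<and> monomial_ass_set X M A}"
proof (intro set_eqI iffI)
  fix P :: "('v, 'k) mpoly set"
  assume "P \<in> Ass (polys_in X) (monomial_ideal X M)"
  then obtain g where prime: "is_prime_in (polys_in X) P" and g: "g \<in> polys_in X" "colon X M g = P"
    unfolding Ass_def colon_def by blast
  define A where "A = {a \<in> X. var a \<in> P}"
  have P: "P = var_prime X A"
    unfolding A_def using single_in_prime_if_in_keys[OF assms prime g]
    by (rule prime_eq_var_prime[OF prime])
  obtain \<kappa> where \<kappa>: "Poly_Mapping.keys \<kappa> \<subseteq> X" "colon X M (Poly_Mapping.single \<kappa> 1) = P"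
    using ex_colon_single_eq[OF assms prime g] by blast
  then have "monomial_ass_set X M A"
    using colon_single_eq_monomial_ideal_iff[OF \<kappa>(1), of M "has_var_in A"]
    unfolding monomial_ass_set_def P var_prime_def by (metis add.commute)
  moreover have "A \<subseteq> X"
    unfolding A_def by blast
  ultimately show "P \<in> var_prime X ` {A. A \<subseteq> X \<and> monomial_ass_set X M A}"
    unfolding P by blast
next
  fix P :: "('v, 'k) mpoly set"
  assume "P \<in> var_prime X ` {A. A \<subseteq> X \<and> monomial_ass_set X M A}"
  then obtain A \<mu> where P: "P = var_prime X A" and \<mu>: "Poly_Mapping.keys \<mu> \<subseteq> X"
    and iff: "\<forall>\<nu>. Poly_Mapping.keys \<nu> \<subseteq> X \<longrightarrow> (M (\<mu> + \<nu>) \<longleftrightarrow> has_var_in A \<nu>)"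
    unfolding monomial_ass_set_def by blast
  have "colon X M (Poly_Mapping.single \<mu> 1) = P"
    unfolding P var_prime_def colon_single_eq_monomial_ideal_iff[OF \<mu>]
    using iff by (simp add: add.commute)
  then show "P \<in> Ass (polys_in X) (monomial_ideal X M)"
    using var_prime_is_prime[OF assms(1)] polys_in_single[OF \<mu>]
    unfolding Ass_def colon_def P by blast
qed

lemma ideal_gen_vars:
  assumes "A \<subseteq> X"
  shows "ideal_gen (polys_in X) (var ` A) = (var_prime X A :: ('v, 'k::field) mpoly set)"
proof -
  have "(var ` A :: ('v, 'k) mpoly set) = (\<lambda>\<beta>. Poly_Mapping.single \<beta> 1) ` (\<lambda>a. Poly_Mapping.single a 1) ` A"
    by (simp add: image_image var_def)
  also have "ideal_gen (polys_in X) \<dots> = monomial_ideal X (\<lambda>\<mu>. Poly_Mapping.keys \<mu> \<subseteq> X \<and>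
      (\<exists>\<beta>\<in>(\<lambda>a. Poly_Mapping.single a 1) ` A. exp_dvd \<beta> \<mu>))"
    using assms by (intro ideal_gen_monomials) auto
  also have "\<dots> = var_prime X A"
    unfolding var_prime_def
    by (rule monomial_ideal_cong) (auto simp: has_var_in_def exp_dvd_def lookup_single_if Suc_le_eq)
  finally show ?thesis .
qed

lemma ideal_gen_var_prime:
  assumes "A \<subseteq> Y" and "Y \<subseteq> X"
  shows "ideal_gen (polys_in X) (var_prime Y A) = (var_prime X A :: ('v, 'k::field) mpoly set)"
proof
  have "(var_prime Y A :: ('v, 'k) mpoly set) \<subseteq> var_prime X A"
    using polys_in_mono[OF assms(2)] by (auto simp: var_prime_def monomial_ideal_iff)
  then show "ideal_gen (polys_in X) (var_prime Y A) \<subseteq> (var_prime X A :: ('v, 'k) mpoly set)"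
    unfolding var_prime_def by (rule ideal_gen_least[OF monomial_ideal_is_ideal[OF has_var_in_upward_closed]])
  have "(var ` A :: ('v, 'k) mpoly set) \<subseteq> var_prime Y A"
    using ideal_gen_superset unfolding ideal_gen_vars[OF assms(1), symmetric] .
  then have "ideal_gen (polys_in X) (var ` A) \<subseteq> (ideal_gen (polys_in X) (var_prime Y A) :: ('v, 'k) mpoly set)"
    by (rule ideal_gen_mono)
  then show "(var_prime X A :: ('v, 'k) mpoly set) \<subseteq> ideal_gen (polys_in X) (var_prime Y A)"
    unfolding ideal_gen_vars[OF subset_trans[OF assms]] .
qed

lemma Ass_ideal_pow_cover_ideal:
  assumes "finite X"
  shows "Ass (polys_in X) (ideal_pow (polys_in X) (cover_ideal X E :: ('v, 'k::field) mpoly set) s) =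
    var_prime X ` {A. A \<subseteq> X \<and> monomial_ass_set X (cover_power_exp X E s) A}"
  unfolding ideal_pow_cover_ideal[OF assms]
  by (rule Ass_monomial_ideal[OF assms cover_power_exp_upward_closed])

section \<open>Adding the edge \<open>{v} \<union> W\<close> on new vertices \<open>W\<close>\<close>

locale edge_extension =
  fixes VG W :: "'v set" and EG :: "'v set set" and v :: 'v
  assumes simple_G: "simple_hypergraph VG EG"
    and finite_W: "finite W" and W_nonempty: "W \<noteq> {}" and W_disjoint: "W \<inter> VG = {}"
    and v_in_VG: "v \<in> VG"
    and simple_H: "simple_hypergraph (VG \<union> W) (EG \<union> {insert v W})"
begin

abbreviation "VH \<equiv> VG \<union> W"
abbreviation "EH \<equiv> EG \<union> {insert v W}"

text \<open>How often a family of vertex covers may meet the new edge.\<close>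

definition new_edge_weight :: "('v \<Rightarrow> nat) \<Rightarrow> nat" where
  "new_edge_weight m = m v + sum m W"

lemma finite_VG: "finite VG"
  using simple_G by (simp add: simple_hypergraph_def)

lemma edge_subset_VG: "e \<in> EG \<Longrightarrow> e \<subseteq> VG"
  using simple_G by (simp add: simple_hypergraph_def)

lemma v_notin_W: "v \<notin> W"
  using v_in_VG W_disjoint by blast

lemma W_notin_VG: "w \<in> W \<Longrightarrow> w \<notin> VG"
  using W_disjoint by blast

lemma new_edge_weight_add:
  "new_edge_weight (Poly_Mapping.lookup (\<mu> + \<nu>)) =
    new_edge_weight (Poly_Mapping.lookup \<mu>) + new_edge_weight (Poly_Mapping.lookup \<nu>)"
  by (simp add: new_edge_weight_def lookup_add sum.distrib)

lemma new_edge_weight_single: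
  "new_edge_weight (Poly_Mapping.lookup (Poly_Mapping.single a k)) = (if a \<in> insert v W then k else 0)"
  using finite_W v_notin_W by (auto simp: new_edge_weight_def lookup_single_if sum.delta')

lemma vertex_cover_restrict:
  "vertex_cover VH EH C \<Longrightarrow> vertex_cover VG EG (C \<inter> VG)"
  using edge_subset_VG by (fastforce simp: vertex_cover_def)

lemma covers_le_extension_imp:
  assumes "covers_le VH EH n m"
  shows "covers_le VG EG n m \<and> n \<le> new_edge_weight m"
proof -
  obtain C where C: "\<forall>k<n. vertex_cover VH EH (C k)" "\<forall>i. cover_count C n i \<le> m i"
    using assms unfolding covers_le_def by blast
  have "cover_count (\<lambda>k. C k \<inter> VG) n i \<le> cover_count C n i" for i
    unfolding cover_count_def by (rule card_mono) auto
  then have "\<forall>i. cover_count (\<lambda>k. C k \<inter> VG) n i \<le> m i"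
    using C(2) le_trans by blast
  moreover have "\<forall>k<n. vertex_cover VG EG (C k \<inter> VG)"
    using C(1) vertex_cover_restrict by blast
  ultimately have "covers_le VG EG n m"
    unfolding covers_le_def by (intro exI[of _ "\<lambda>k. C k \<inter> VG"]) blast
  moreover have "n \<le> new_edge_weight m"
  proof -
    have "{..<n} \<subseteq> (\<Union>i\<in>insert v W. {k. k < n \<and> i \<in> C k})"
      using C(1) by (force simp: vertex_cover_def)
    then have "n \<le> card (\<Union>i\<in>insert v W. {k. k < n \<and> i \<in> C k})"
      using card_mono[of "\<Union>i\<in>insert v W. {k. k < n \<and> i \<in> C k}" "{..<n}"] finite_W by simp
    also have "\<dots> \<le> (\<Sum>i\<in>insert v W. cover_count C n i)"
      unfolding cover_count_def by (rule card_UN_le) (simp add: finite_W)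
    also have "\<dots> \<le> new_edge_weight m"
      using C(2) finite_W v_notin_W by (simp add: new_edge_weight_def add_mono sum_mono)
    finally show ?thesis .
  qed
  ultimately show ?thesis
    by blast
qed

lemma new_edge_weight_remove_vertex:
  assumes "C \<inter> insert v W = {a}" and "0 < m a"
  shows "new_edge_weight (\<lambda>i. m i - of_bool (i \<in> C)) + 1 = new_edge_weight m"
proof -
  have a: "a \<in> insert v W" "a \<in> C"
    using assms(1) by blast+
  have weight_eq_sum: "new_edge_weight m' = (\<Sum>i\<in>insert v W. m' i)" for m'
    using finite_W v_notin_W by (simp add: new_edge_weight_def)
  have "(\<Sum>i\<in>insert v W - {a}. m i - of_bool (i \<in> C)) = (\<Sum>i\<in>insert v W - {a}. m i)"
    using assms(1) by (intro sum.cong) auto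
  then show ?thesis
    using a assms(2) finite_W by (simp add: weight_eq_sum sum.remove[of _ a])
qed

text \<open>One step of the greedy construction: turn the last cover of \<open>G\<close> into a cover of \<open>H\<close>
  that meets the new edge exactly once.\<close>

lemma ex_cover_meeting_new_edge_once:
  assumes D: "vertex_cover VG EG D" "\<forall>i\<in>D. 0 < m i"
    and rest: "covers_le VG EG n (\<lambda>i. m i - of_bool (i \<in> D))"
    and weight: "Suc n \<le> new_edge_weight m"
  shows "\<exists>C a. D \<subseteq> C \<and> C \<subseteq> VH \<and> C \<inter> insert v W = {a} \<and> (\<forall>i\<in>C. 0 < m i) \<and>
    covers_le VG EG n (\<lambda>i. m i - of_bool (i \<in> C))"
proof -
  have D_VG: "D \<subseteq> VG"
    by (rule vertex_cover_subset[OF D(1)])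
  consider (v) "v \<in> D" | (w) w where "v \<notin> D" "w \<in> W" "0 < m w" | (only_v) "v \<notin> D" "\<forall>w\<in>W. m w = 0"
    by (metis neq0_conv)
  then show ?thesis
  proof cases
    case v
    then have "D \<inter> insert v W = {v}"
      using D_VG W_disjoint by blast
    then show ?thesis
      using D_VG D(2) rest by blast
  next
    case (w w)
    then have "insert w D \<inter> insert v W = {w}"
      using D_VG W_disjoint by blast
    moreover have "covers_le VG EG n (\<lambda>i. m i - of_bool (i \<in> insert w D))"
      using rest by (rule covers_le_mono) (use W_notin_VG[OF w(2)] in auto)
    ultimately show ?thesis
      using w D_VG D(2) by (intro exI[of _ "insert w D"]) blast
  next
    case only_v
    then have "Suc n \<le> m v"
      using weight by (simp add: new_edge_weight_def)
    have "insert v D \<inter> insert v W = {v}"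
      using D_VG W_disjoint by blast
    moreover have "covers_le VG EG n (\<lambda>i. m i - of_bool (i \<in> insert v D))"
      using rest by (rule covers_le_mono_min) (use only_v \<open>Suc n \<le> m v\<close> in auto)
    ultimately show ?thesis
      using D_VG D(2) v_in_VG \<open>Suc n \<le> m v\<close> by (intro exI[of _ "insert v D"]) auto
  qed
qed

lemma covers_le_extension_step:
  assumes D: "vertex_cover VG EG D" "\<forall>i\<in>D. 0 < m i"
    and rest: "covers_le VG EG n (\<lambda>i. m i - of_bool (i \<in> D))"
    and weight: "Suc n \<le> new_edge_weight m"
  obtains C where "vertex_cover VH EH C" "\<forall>i\<in>C. 0 < m i"
    "covers_le VG EG n (\<lambda>i. m i - of_bool (i \<in> C))" "n \<le> new_edge_weight (\<lambda>i. m i - of_bool (i \<in> C))"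
proof -
  obtain C a where C: "D \<subseteq> C" "C \<subseteq> VH" "C \<inter> insert v W = {a}" "\<forall>i\<in>C. 0 < m i"
    and rest_C: "covers_le VG EG n (\<lambda>i. m i - of_bool (i \<in> C))"
    using ex_cover_meeting_new_edge_once[OF D rest weight] by blast
  have cover: "vertex_cover VH EH C"
    unfolding vertex_cover_def
  proof (intro conjI ballI)
    fix e assume "e \<in> EH"
    then consider "e \<in> EG" | "e = insert v W"
      by blast
    then show "C \<inter> e \<noteq> {}"
    proof cases
      case 1
      then have "D \<inter> e \<noteq> {}"
        using D(1) unfolding vertex_cover_def by blast
      then show ?thesis
        using C(1) by blast
    qed (use C(3) in blast)
  qed (rule C(2))
  have "new_edge_weight (\<lambda>i. m i - of_bool (i \<in> C)) + 1 = new_edge_weight m"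
    by (rule new_edge_weight_remove_vertex[OF C(3)]) (use C(3,4) in blast)
  then have "n \<le> new_edge_weight (\<lambda>i. m i - of_bool (i \<in> C))"
    using weight by linarith
  then show ?thesis
    by (rule that[OF cover C(4) rest_C])
qed

lemma covers_le_extension_iff:
  "covers_le VH EH n m \<longleftrightarrow> covers_le VG EG n m \<and> n \<le> new_edge_weight m"
proof
  show "covers_le VG EG n m \<and> n \<le> new_edge_weight m \<Longrightarrow> covers_le VH EH n m"
  proof (induction n arbitrary: m)
    case (Suc n)
    then obtain D where "vertex_cover VG EG D" "\<forall>i\<in>D. 0 < m i"
      "covers_le VG EG n (\<lambda>i. m i - of_bool (i \<in> D))"
      unfolding covers_le_Suc_iff by blast
    moreover have "Suc n \<le> new_edge_weight m"
      using Suc.prems by blast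
    ultimately obtain C where "vertex_cover VH EH C" "\<forall>i\<in>C. 0 < m i"
      "covers_le VG EG n (\<lambda>i. m i - of_bool (i \<in> C))" "n \<le> new_edge_weight (\<lambda>i. m i - of_bool (i \<in> C))"
      by (rule covers_le_extension_step)
    then show ?case
      using Suc.IH unfolding covers_le_Suc_iff by blast
  qed simp
qed (rule covers_le_extension_imp)

lemma cover_power_exp_extension_iff:
  "cover_power_exp VH EH s \<mu> \<longleftrightarrow>
    Poly_Mapping.keys \<mu> \<subseteq> VH \<and> covers_le VG EG s (Poly_Mapping.lookup \<mu>) \<and>
    s \<le> new_edge_weight (Poly_Mapping.lookup \<mu>)"
  unfolding cover_power_exp_def covers_le_extension_iff by blast

lemma covers_le_add: "covers_le X E s (Poly_Mapping.lookup \<mu>) \<Longrightarrow> covers_le X E s (Poly_Mapping.lookup (\<mu> + \<nu>))"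
  by (erule covers_le_mono) (simp add: lookup_add)

lemma new_edge_weight_pos_iff: "0 < new_edge_weight (Poly_Mapping.lookup \<nu>) \<longleftrightarrow> has_var_in (insert v W) \<nu>"
  using finite_W by (auto simp: new_edge_weight_def has_var_in_def)

lemma vertex_cover_VG_minus_v: "vertex_cover VG EG (VG - {v})"
proof -
  have "\<exists>x\<in>e. x \<noteq> v" if e: "e \<in> EG" for e
  proof (rule ccontr)
    assume "\<not> (\<exists>x\<in>e. x \<noteq> v)"
    then have "e \<subseteq> insert v W"
      by blast
    then have "e = insert v W"
      using simple_H e unfolding simple_hypergraph_def by blast
    then show False
      using edge_subset_VG[OF e] W_nonempty W_disjoint by blast
  qed
  then show ?thesis
    using edge_subset_VG unfolding vertex_cover_def by blast
qed

lemma monomial_ass_set_extension_of_old: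
  assumes "A \<subseteq> VG" and "monomial_ass_set VG (cover_power_exp VG EG s) A"
  shows "monomial_ass_set VH (cover_power_exp VH EH s) A"
proof -
  obtain \<mu> where \<mu>: "Poly_Mapping.keys \<mu> \<subseteq> VG"
    and iff: "\<And>\<nu>. Poly_Mapping.keys \<nu> \<subseteq> VG \<Longrightarrow> cover_power_exp VG EG s (\<mu> + \<nu>) \<longleftrightarrow> has_var_in A \<nu>"
    using assms(2) unfolding monomial_ass_set_def by blast
  obtain w where w: "w \<in> W"
    using W_nonempty by blast
  define \<mu>' where "\<mu>' = \<mu> + Poly_Mapping.single w s"
  have "cover_power_exp VH EH s (\<mu>' + \<nu>) \<longleftrightarrow> has_var_in A \<nu>" if \<nu>: "Poly_Mapping.keys \<nu> \<subseteq> VH" for \<nu>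
  proof -
    let ?\<nu>G = "restrict_keys (\<lambda>i. i \<in> VG) \<nu>"
    have "cover_power_exp VH EH s (\<mu>' + \<nu>) \<longleftrightarrow> covers_le VG EG s (Poly_Mapping.lookup (\<mu>' + \<nu>))"
      unfolding cover_power_exp_extension_iff
      using \<mu> \<nu> w by (auto simp: \<mu>'_def keys_add_nat new_edge_weight_add new_edge_weight_single)
    also have "\<dots> \<longleftrightarrow> covers_le VG EG s (Poly_Mapping.lookup (\<mu> + ?\<nu>G))"
      using W_notin_VG[OF w] by (intro covers_le_cong) (auto simp: \<mu>'_def lookup_add lookup_single_if lookup_restrict_keys)
    also have "\<dots> \<longleftrightarrow> cover_power_exp VG EG s (\<mu> + ?\<nu>G)"
      using \<mu> by (auto simp: cover_power_exp_def keys_add_nat keys_restrict_keys)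
    also have "\<dots> \<longleftrightarrow> has_var_in A ?\<nu>G"
      by (rule iff) (auto simp: keys_restrict_keys)
    also have "\<dots> \<longleftrightarrow> has_var_in A \<nu>"
      by (rule has_var_in_restrict_keys[OF assms(1)])
    finally show ?thesis .
  qed
  moreover have "Poly_Mapping.keys \<mu>' \<subseteq> VH"
    using \<mu> w by (auto simp: \<mu>'_def keys_add_nat)
  ultimately show ?thesis
    unfolding monomial_ass_set_def by blast
qed

lemma monomial_ass_set_new_edge:
  assumes "1 \<le> s"
  shows "monomial_ass_set VH (cover_power_exp VH EH s) (insert v W)"
proof -
  define \<mu> where "\<mu> = (\<Sum>i\<in>VG - {v}. Poly_Mapping.single i s) + Poly_Mapping.single v (s - 1)"
  have lookup_\<mu>: "Poly_Mapping.lookup \<mu> i = (if i \<in> VG - {v} then s else 0) + (if i = v then s - 1 else 0)" for i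
    using finite_VG by (simp add: \<mu>_def lookup_add lookup_sum lookup_single_if)
  have keys_\<mu>: "Poly_Mapping.keys \<mu> \<subseteq> VH"
    using v_in_VG by (auto simp: in_keys_iff lookup_\<mu> split: if_splits)
  have covers: "covers_le VG EG s (Poly_Mapping.lookup \<mu>)"
    unfolding covers_le_def using vertex_cover_VG_minus_v
    by (intro exI[of _ "\<lambda>_. VG - {v}"]) (simp add: cover_count_const lookup_\<mu>)
  have weight: "new_edge_weight (Poly_Mapping.lookup \<mu>) = s - 1"
    using v_in_VG W_notin_VG v_notin_W finite_W by (simp add: new_edge_weight_def lookup_\<mu> sum.delta)
  have "cover_power_exp VH EH s (\<mu> + \<nu>) \<longleftrightarrow> has_var_in (insert v W) \<nu>"
    if "Poly_Mapping.keys \<nu> \<subseteq> VH" for \<nu>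
    unfolding cover_power_exp_extension_iff
    using that keys_\<mu> covers_le_add[OF covers] assms
    by (auto simp: keys_add_nat new_edge_weight_add weight simp flip: new_edge_weight_pos_iff)
  then show ?thesis
    unfolding monomial_ass_set_def using keys_\<mu> by blast
qed

text \<open>A witness \<open>\<mu>\<close> for an associated set \<open>A\<close> of \<open>J(H)\<^sup>s\<close>: either the part of \<open>\<mu>\<close> on \<open>G\<close>
  fails to lie in \<open>J(G)\<^sup>s\<close>, and then \<open>A\<close> is associated to \<open>J(G)\<^sup>s\<close>, or only weight on the new
  edge is missing, and then \<open>A\<close> is the new edge.\<close>

context
  fixes A :: "'v set" and \<mu> :: "'v \<Rightarrow>\<^sub>0 nat" and s :: nat
  assumes A_subset: "A \<subseteq> VH" and keys_\<mu>: "Poly_Mapping.keys \<mu> \<subseteq> VH"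
    and witness: "\<And>\<nu>. Poly_Mapping.keys \<nu> \<subseteq> VH \<Longrightarrow> cover_power_exp VH EH s (\<mu> + \<nu>) \<longleftrightarrow> has_var_in A \<nu>"
begin

lemma ass_witness_restrict_iff:
  assumes "w \<in> W" and "Poly_Mapping.keys \<nu> \<subseteq> VG"
  shows "cover_power_exp VG EG s (restrict_keys (\<lambda>i. i \<in> VG) \<mu> + \<nu>) \<longleftrightarrow>
    cover_power_exp VH EH s (\<mu> + (\<nu> + Poly_Mapping.single w s))"
proof -
  have "covers_le VG EG s (Poly_Mapping.lookup (restrict_keys (\<lambda>i. i \<in> VG) \<mu> + \<nu>)) \<longleftrightarrow>
      covers_le VG EG s (Poly_Mapping.lookup (\<mu> + (\<nu> + Poly_Mapping.single w s)))"
    using W_notin_VG[OF assms(1)]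
    by (intro covers_le_cong) (auto simp: lookup_add lookup_single_if lookup_restrict_keys)
  moreover have "s \<le> new_edge_weight (Poly_Mapping.lookup (\<mu> + (\<nu> + Poly_Mapping.single w s)))"
    using assms(1) by (simp add: new_edge_weight_add new_edge_weight_single)
  ultimately show ?thesis
    unfolding cover_power_exp_extension_iff using keys_\<mu> assms
    by (auto simp: cover_power_exp_def keys_add_nat keys_restrict_keys)
qed

lemma ass_witness_disjoint_W:
  assumes "\<not> covers_le VG EG s (Poly_Mapping.lookup \<mu>)"
  shows "A \<inter> W = {}"
proof (rule ccontr)
  assume "A \<inter> W \<noteq> {}"
  then obtain w where w: "w \<in> A" "w \<in> W"
    by blast
  have "0 < s"
    using assms by (metis covers_le_0 neq0_conv)
  then have "cover_power_exp VH EH s (\<mu> + (0 + Poly_Mapping.single w s))"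
    using witness[of "Poly_Mapping.single w s"] w by (simp add: has_var_in_single)
  then have "covers_le VG EG s (Poly_Mapping.lookup (restrict_keys (\<lambda>i. i \<in> VG) \<mu>))"
    using ass_witness_restrict_iff[OF w(2), of 0] by (simp add: cover_power_exp_def)
  moreover have "covers_le VG EG s (Poly_Mapping.lookup (restrict_keys (\<lambda>i. i \<in> VG) \<mu>)) \<longleftrightarrow>
      covers_le VG EG s (Poly_Mapping.lookup \<mu>)"
    by (intro covers_le_cong) (simp add: lookup_restrict_keys)
  ultimately show False
    using assms by blast
qed

lemma ass_witness_ass_set_old:
  assumes "\<not> covers_le VG EG s (Poly_Mapping.lookup \<mu>)"
  shows "monomial_ass_set VG (cover_power_exp VG EG s) A"
proof -
  obtain w where w: "w \<in> W"
    using W_nonempty by blast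
  have "cover_power_exp VG EG s (restrict_keys (\<lambda>i. i \<in> VG) \<mu> + \<nu>) \<longleftrightarrow> has_var_in A \<nu>"
    if \<nu>: "Poly_Mapping.keys \<nu> \<subseteq> VG" for \<nu>
  proof -
    have "cover_power_exp VG EG s (restrict_keys (\<lambda>i. i \<in> VG) \<mu> + \<nu>) \<longleftrightarrow>
        has_var_in A (\<nu> + Poly_Mapping.single w s)"
      unfolding ass_witness_restrict_iff[OF w \<nu>] using \<nu> w by (intro witness) (auto simp: keys_add_nat)
    also have "\<dots> \<longleftrightarrow> has_var_in A \<nu>"
      using ass_witness_disjoint_W[OF assms] w by (auto simp: has_var_in_add has_var_in_single)
    finally show ?thesis .
  qed
  moreover have "Poly_Mapping.keys (restrict_keys (\<lambda>i. i \<in> VG) \<mu>) \<subseteq> VG"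
    by (auto simp: keys_restrict_keys)
  ultimately show ?thesis
    unfolding monomial_ass_set_def by blast
qed

lemma ass_witness_eq_new_edge:
  assumes covers: "covers_le VG EG s (Poly_Mapping.lookup \<mu>)"
  shows "A = insert v W"
proof -
  define r where "r = s - new_edge_weight (Poly_Mapping.lookup \<mu>)"
  have iff_weight: "has_var_in A \<nu> \<longleftrightarrow> r \<le> new_edge_weight (Poly_Mapping.lookup \<nu>)"
    if "Poly_Mapping.keys \<nu> \<subseteq> VH" for \<nu>
  proof -
    have "new_edge_weight (Poly_Mapping.lookup \<mu>) < s"
      using witness[of 0] keys_\<mu> covers unfolding cover_power_exp_extension_iff by (auto simp: has_var_in_def)
    then show ?thesis
      using witness[OF that] that keys_\<mu> covers_le_add[OF covers] unfolding cover_power_exp_extension_iff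
      by (auto simp: keys_add_nat new_edge_weight_add r_def)
  qed
  have "0 < r"
    using iff_weight[of 0] by (simp add: has_var_in_def new_edge_weight_def)
  then have "has_var_in A (Poly_Mapping.single v r)"
    using iff_weight[of "Poly_Mapping.single v r"] v_in_VG by (simp add: new_edge_weight_single)
  then have "r \<le> 1"
    using iff_weight[of "Poly_Mapping.single v 1"] v_in_VG by (simp add: new_edge_weight_single has_var_in_single)
  have "a \<in> A \<longleftrightarrow> a \<in> insert v W" if "a \<in> VH" for a
    using iff_weight[of "Poly_Mapping.single a 1"] that \<open>0 < r\<close> \<open>r \<le> 1\<close>
    by (simp add: new_edge_weight_single has_var_in_single)
  then show ?thesis
    using A_subset v_in_VG by blast
qed

end

lemma monomial_ass_sets_extension:
  assumes "1 \<le> s"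
  shows "{A. A \<subseteq> VH \<and> monomial_ass_set VH (cover_power_exp VH EH s) A} =
    {A. A \<subseteq> VG \<and> monomial_ass_set VG (cover_power_exp VG EG s) A} \<union> {insert v W}"
proof (intro set_eqI iffI)
  fix A
  assume "A \<in> {A. A \<subseteq> VH \<and> monomial_ass_set VH (cover_power_exp VH EH s) A}"
  then obtain \<mu> where A: "A \<subseteq> VH" and \<mu>: "Poly_Mapping.keys \<mu> \<subseteq> VH"
    and witness: "\<And>\<nu>. Poly_Mapping.keys \<nu> \<subseteq> VH \<Longrightarrow> cover_power_exp VH EH s (\<mu> + \<nu>) \<longleftrightarrow> has_var_in A \<nu>"
    unfolding monomial_ass_set_def by blast
  show "A \<in> {A. A \<subseteq> VG \<and> monomial_ass_set VG (cover_power_exp VG EG s) A} \<union> {insert v W}"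
  proof (cases "covers_le VG EG s (Poly_Mapping.lookup \<mu>)")
    case True
    then show ?thesis
      using ass_witness_eq_new_edge[OF A \<mu> witness] by blast
  next
    case False
    then have "A \<inter> W = {}" "monomial_ass_set VG (cover_power_exp VG EG s) A"
      using ass_witness_disjoint_W[OF A \<mu> witness] ass_witness_ass_set_old[OF A \<mu> witness] by blast+
    then show ?thesis
      using A by blast
  qed
next
  fix A
  assume "A \<in> {A. A \<subseteq> VG \<and> monomial_ass_set VG (cover_power_exp VG EG s) A} \<union> {insert v W}"
  then show "A \<in> {A. A \<subseteq> VH \<and> monomial_ass_set VH (cover_power_exp VH EH s) A}"
    using monomial_ass_set_extension_of_old monomial_ass_set_new_edge[OF assms] v_in_VG by blast
qed

end

theorem theorem2p16:
  fixes VG W :: "'v set" and EG :: "'v set set" and v :: 'v and s :: nat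
  assumes "simple_hypergraph VG EG"
    and "finite W" and "W \<noteq> {}" and "W \<inter> VG = {}"
    and "v \<in> VG"
    and "simple_hypergraph (VG \<union> W) (EG \<union> {insert v W})"
    and "s \<ge> 1"
  shows "Ass (polys_in (VG \<union> W)) (ideal_pow (polys_in (VG \<union> W))
            (cover_ideal (VG \<union> W) (EG \<union> {insert v W}) :: ('v, 'k::field) mpoly set) s)
       = (\<lambda>P. ideal_gen (polys_in (VG \<union> W)) P) `
            Ass (polys_in VG) (ideal_pow (polys_in VG) (cover_ideal VG EG) s)
         \<union> {ideal_gen (polys_in (VG \<union> W)) (var ` (insert v W))}"
proof -
  interpret edge_extension VG W EG v
    by (rule edge_extension.intro) (fact assms)+
  let ?ass_G = "{A. A \<subseteq> VG \<and> monomial_ass_set VG (cover_power_exp VG EG s) A}"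
  have "Ass (polys_in VH) (ideal_pow (polys_in VH) (cover_ideal VH EH :: ('v, 'k) mpoly set) s) =
      var_prime VH ` (?ass_G \<union> {insert v W})"
    unfolding Ass_ideal_pow_cover_ideal[OF finite_UnI[OF finite_VG assms(2)]]
      monomial_ass_sets_extension[OF assms(7)] ..
  also have "\<dots> = (\<lambda>P. ideal_gen (polys_in VH) P) ` var_prime VG ` ?ass_G \<union> {var_prime VH (insert v W)}"
    unfolding image_Un image_image by (auto simp: ideal_gen_var_prime)
  also have "var_prime VH (insert v W) = (ideal_gen (polys_in VH) (var ` insert v W) :: ('v, 'k) mpoly set)"
    using v_in_VG by (intro ideal_gen_vars[symmetric]) blast
  finally show ?thesis
    unfolding Ass_ideal_pow_cover_ideal[OF finite_VG] .
qed

end
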